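(* Let $C_0\ge1$. There is a constant $M$ depending only on $C_0$ such that the following holds. Let $k,k'$ be positive integers and $w>0$ with $$0<k'-k\le C_0w^{-1},\qquad w^{-1}\le C_0k .$$ Let $f=\cos(kx)e^{-kt}$, $g=\cos(k'y)e^{-k't}$ (both harmonic in $\mathbb{T}^2\times\mathbb{R}$), put $\alpha(t)=\theta(t/w)$ and $$u=\begin{cases}f+(1-\alpha(t))g,& t\le w,\\ \alpha(t-w)f+g,& t\ge w.\end{cases}$$ Then: (a) there is a $C^1$ real $2\times2$ matrix-valued function $A(x,y,t)$ on $\mathbb{T}^2\times\mathbb{R}$, equal to the identity for $t\le0$ and $t\ge 2w$, such that $\ddot u+\operatorname{div}(A\nabla u)=0$ on $\mathbb{T}^2\times\mathbb{R}$; (b) on $\mathbb{T}^2\times\mathbb{R}$, $\|A-\mathrm{Id}\|\le \frac{M}{wk}$, $\|\nabla A\|\le\frac{M}{w}$ and $\|\dot A\|\le\frac Mw$; (c) for every multi-index $\beta\in\mathbb{N}^3$ (derivatives in $x,y,t$) with $|\beta|\le2$ and every $(x,y,t)\in\mathbb{T}^2\times[0,2w]$, $$|\partial^\beta u(x,y,t)|\le M(k')^{|\beta|}\sup_{\mathbb{T}^2\times[0,2w]}|u|.$$ In particular $u=f$ for $t\le0$ and $u=g$ for $t\ge2w$.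
   Context: $\mathbb{T}^2=(\mathbb{R}/2\pi\mathbb{Z})^2$ with coordinates $(x,y)$, $t$ the third coordinate. For a real $2\times2$ matrix function $A(x,y,t)$, $\ddot u+\operatorname{div}(A\nabla u)$ means $\partial_t^2u+\sum_{i,j\in\{x,y\}}\partial_i(A_{ij}\partial_ju)$; $\nabla A$ denotes the spatial $(x,y)$-derivatives of the entries of $A$ and $\dot A=\partial_tA$. The function $\theta:\mathbb{R}\to[0,1]$ is defined by $\theta(t)=1$ for $t\le0$, $\theta(t)=0$ for $t\ge1$, and $\theta(t)=1-G(\tan(\pi(t-1/2)))$ for $t\in(0,1)$, where $G(s)=\pi^{-1/2}\int_{-\infty}^se^{-\eta^2}\,d\eta$; it is $C^\infty$, monotonically decreasing on $(0,1)$. *)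

theory Defs
  imports "HOL-Analysis.Analysis"
begin

definition Gerf :: "real \<Rightarrow> real" where
  "Gerf s = (LBINT \<eta>:{..s}. exp (- (\<eta>^2))) / sqrt pi"

definition theta :: "real \<Rightarrow> real" where
  "theta t = (if t \<le> 0 then 1 else if 1 \<le> t then 0
              else 1 - Gerf (tan (pi * (t - 1/2))))"

text \<open>Partial derivatives of a function of (x,y,t): index 0 = x, 1 = y, 2 = t.\<close>
definition pd :: "nat \<Rightarrow> (real \<Rightarrow> real \<Rightarrow> real \<Rightarrow> 'a::real_normed_vector)
                   \<Rightarrow> real \<Rightarrow> real \<Rightarrow> real \<Rightarrow> 'a" where
  "pd i F x y t =
     (if i = 0 then vector_derivative (\<lambda>s. F s y t) (at x)
      else if i = 1 then vector_derivative (\<lambda>s. F x s t) (at y)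
      else vector_derivative (\<lambda>s. F x y s) (at t))"

text \<open>Iterated partial derivative for a multi-index given as a list of directions.\<close>
definition pderivs :: "nat list \<Rightarrow> (real \<Rightarrow> real \<Rightarrow> real \<Rightarrow> 'a::real_normed_vector)
                   \<Rightarrow> real \<Rightarrow> real \<Rightarrow> real \<Rightarrow> 'a" where
  "pderivs is F = foldr pd is F"

definition ffun :: "nat \<Rightarrow> real \<Rightarrow> real \<Rightarrow> real \<Rightarrow> real" where
  "ffun k x y t = cos (real k * x) * exp (- real k * t)"

definition gfun :: "nat \<Rightarrow> real \<Rightarrow> real \<Rightarrow> real \<Rightarrow> real" where
  "gfun k' x y t = cos (real k' * y) * exp (- real k' * t)"

definition ufun :: "nat \<Rightarrow> nat \<Rightarrow> real \<Rightarrow> real \<Rightarrow> real \<Rightarrow> real \<Rightarrow> real" where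
  "ufun k k' w x y t =
     (if t \<le> w then ffun k x y t + (1 - theta (t / w)) * gfun k' x y t
      else theta ((t - w) / w) * ffun k x y t + gfun k' x y t)"

definition C1_fun3 :: "(real \<Rightarrow> real \<Rightarrow> real \<Rightarrow> 'a::real_normed_vector) \<Rightarrow> bool" where
  "C1_fun3 F \<longleftrightarrow> (\<exists>D :: real \<times> real \<times> real \<Rightarrow> (real \<times> real \<times> real) \<Rightarrow>\<^sub>L 'a.
      (\<forall>p. ((\<lambda>(x, y, t). F x y t) has_derivative blinfun_apply (D p)) (at p))
      \<and> continuous_on UNIV D)"

definition periodic_xy :: "(real \<Rightarrow> real \<Rightarrow> real \<Rightarrow> 'a) \<Rightarrow> bool" where
  "periodic_xy F \<longleftrightarrow> (\<forall>x y t. F (x + 2*pi) y t = F x y t \<and> F x (y + 2*pi) t = F x y t)"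

end

theory Submission
  imports Defs "HOL-Probability.Distributions" "HOL-Real_Asymp.Real_Asymp"
begin

text \<open>With \<open>\<alpha> t = theta (t / w)\<close>, the function \<open>u\<close> equals \<open>\<alpha> (t - w) * f + (1 - \<alpha> t) * g\<close> on all
  of \<open>\<real>\<close>. The hypotheses bound the frequencies \<open>1 / w\<close>, \<open>k\<close>, \<open>k'\<close> and \<open>k' - k\<close> by a multiple
  of \<open>k\<close>, so every derivative of order \<open>n \<le> 2\<close> of \<open>u\<close> is \<open>O(k'\<^sup>n)\<close>, while \<open>u 0 0 0 = 1\<close>
  bounds the supremum of \<open>\<bar>u\<bar>\<close> from below.

  Since \<open>f\<close> and \<open>g\<close> are harmonic, the cut-offs leave the residual
  \<open>\<Delta>u + u\<^sub>t\<^sub>t = cos (k x) * (a'' - 2 k a') * e\<^sup>-\<^sup>k\<^sup>t + cos (k' y) * (b'' - 2 k' b') * e\<^sup>-\<^sup>k\<^sup>'\<^sup>t\<close>,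
  where \<open>a\<close> and \<open>b\<close> are the two cut-offs. It is absorbed by a perturbation
  \<open>A - 1 = cos (k x) cos (k' y) A_cos t + sin (k x) sin (k' y) A_sin t\<close>: in \<open>div ((A - 1) \<nabla>u)\<close> the
  identities \<open>sin\<^sup>2 + cos\<^sup>2 = 1\<close> remove the dependence on \<open>x\<close> and \<open>y\<close>, and the coefficients of \<open>A_cos\<close>
  and \<open>A_sin\<close> can be chosen so that exactly minus the residual remains. These coefficients are
  derivatives of the cut-offs divided by \<open>k\<^sup>2\<close>, hence of size \<open>1 / (w k)\<close>, which gives the bounds
  on \<open>A\<close>.\<close>

section \<open>The cut-off \<open>theta\<close>\<close>

abbreviation gauss :: "real \<Rightarrow> real" where "gauss x \<equiv> exp (- (x\<^sup>2))"

lemma gauss_has_bochner_integral_nonpos: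
  "has_bochner_integral lborel (\<lambda>x. indicator {..0} x *\<^sub>R gauss x) (sqrt pi / 2)"
proof -
  have "has_bochner_integral lborel (\<lambda>x. indicator {0..} (0 + (-1) * x) *\<^sub>R gauss (0 + (-1) * x))
      ((sqrt pi / 2) /\<^sub>R \<bar>-1\<bar>)"
    using gaussian_moment_0 lborel_has_bochner_integral_real_affine_iff[where c="-1::real" and t=0
        and f="\<lambda>x. indicator {0..} x *\<^sub>R gauss x" and x="sqrt pi / 2"]
    by simp
  moreover have "(\<lambda>x. indicator {0..} (0 + (-1) * x) *\<^sub>R gauss (0 + (-1) * x))
      = (\<lambda>x. indicator {..0} x *\<^sub>R gauss x)"
    by (auto simp: indicator_def fun_eq_iff)
  ultimately show ?thesis by simp
qed

lemma gauss_has_bochner_integral: "has_bochner_integral lborel gauss (sqrt pi)"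
proof -
  have "has_bochner_integral lborel
      (\<lambda>x. indicator {0..} x *\<^sub>R gauss x + indicator {..0} x *\<^sub>R gauss x) (sqrt pi / 2 + sqrt pi / 2)"
    using gaussian_moment_0 gauss_has_bochner_integral_nonpos by (rule has_bochner_integral_add)
  moreover have "AE x in lborel. indicator {0..} x *\<^sub>R gauss x + indicator {..0} x *\<^sub>R gauss x = gauss x"
    using AE_lborel_singleton[of 0] by eventually_elim (auto simp: indicator_def)
  ultimately show ?thesis
    by (subst (asm) has_bochner_integral_cong_AE) auto
qed

lemma integrable_gauss: "integrable lborel gauss"
  using gauss_has_bochner_integral by (simp add: has_bochner_integral_iff)

definition gauss_lower :: "real \<Rightarrow> real" where
  "gauss_lower s = (\<integral>x. indicator {..s} x *\<^sub>R gauss x \<partial>lborel)"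

lemma Gerf_eq_gauss_lower: "Gerf = (\<lambda>s. gauss_lower s / sqrt pi)"
  by (simp add: fun_eq_iff Gerf_def gauss_lower_def set_lebesgue_integral_def)

lemma gauss_lower_at_top: "(gauss_lower \<longlongrightarrow> sqrt pi) at_top"
  using tendsto_integral_at_top[OF _ integrable_gauss] gauss_has_bochner_integral
  by (simp add: gauss_lower_def[abs_def] has_bochner_integral_iff)

lemma gauss_lower_at_bot: "(gauss_lower \<longlongrightarrow> 0) at_bot"
  unfolding gauss_lower_def
proof (rule tendsto_at_botI_sequentially)
  fix X :: "nat \<Rightarrow> real"
  assume "filterlim X at_bot sequentially"
  then have "eventually (\<lambda>n. \<not> x \<le> X n) sequentially" for x
    by (simp add: filterlim_at_bot_dense not_le)
  then have lim: "AE x in lborel. (\<lambda>n. indicator {..X n} x *\<^sub>R gauss x) \<longlonglongrightarrow> (0::real)"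
    by (intro AE_I2 tendsto_eventually) (auto split: split_indicator elim!: eventually_mono)
  have bound: "AE x in lborel. norm (indicator {..X n} x *\<^sub>R gauss x) \<le> norm (gauss x)" for n
    by (auto split: split_indicator)
  show "(\<lambda>n. \<integral>x. indicator {..X n} x *\<^sub>R gauss x \<partial>lborel) \<longlonglongrightarrow> 0"
    using integral_dominated_convergence[OF _ _ integrable_norm[OF integrable_gauss] lim bound] by simp
qed

lemma gauss_lower_split: "gauss_lower s = gauss_lower 0 + (LBINT x=ereal 0..ereal s. gauss x)"
proof -
  have int: "integrable lborel (\<lambda>x. indicator A x *\<^sub>R gauss x)" if "A \<in> sets borel" for A :: "real set"
    using integrable_mult_indicator[OF _ integrable_gauss] that by simp
  have split: "gauss_lower b = gauss_lower a + (\<integral>x. indicator {a<..b} x *\<^sub>R gauss x \<partial>lborel)"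
    if "a \<le> b" for a b
  proof -
    have "(\<lambda>x. indicator {..b} x *\<^sub>R gauss x)
        = (\<lambda>x. indicator {..a} x *\<^sub>R gauss x + indicator {a<..b} x *\<^sub>R gauss x)"
      using that by (auto simp: fun_eq_iff indicator_def)
    then show ?thesis
      unfolding gauss_lower_def
      using Bochner_Integration.integral_add[OF int[of "{..a}"] int[of "{a<..b}"]] by simp
  qed
  show ?thesis
  proof (cases "0 \<le> s")
    case True
    then show ?thesis
      using split[OF True] by (simp add: interval_integral_Ioc set_lebesgue_integral_def)
  next
    case False
    then have "gauss_lower 0 = gauss_lower s + (LBINT x=ereal s..ereal 0. gauss x)"
      using split[of s 0] by (simp add: interval_integral_Ioc set_lebesgue_integral_def)
    then show ?thesis
      using interval_integral_endpoints_reverse[of 0 s gauss] by (simp add: zero_ereal_def)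
  qed
qed

lemma gauss_lower_has_real_derivative: "(gauss_lower has_real_derivative gauss s) (at s)"
proof -
  let ?a = "min s 0 - 1" and ?b = "max s 0 + 1"
  have "((\<lambda>u. LBINT y=ereal 0..ereal u. gauss y) has_vector_derivative gauss s) (at s within {?a..?b})"
    by (rule interval_integral_FTC2) (auto intro!: continuous_intros)
  moreover have "at s within {?a..?b} = at s"
    by (rule at_within_interior) auto
  ultimately have "((\<lambda>u. gauss_lower 0 + (LBINT y=ereal 0..ereal u. gauss y)) has_real_derivative gauss s) (at s)"
    by (auto intro!: derivative_eq_intros simp: has_real_derivative_iff_has_vector_derivative)
  then show ?thesis
    by (simp add: gauss_lower_split[symmetric])
qed

lemma Gerf_has_real_derivative: "(Gerf has_real_derivative gauss s / sqrt pi) (at s)"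
  unfolding Gerf_eq_gauss_lower by (intro DERIV_cdivide gauss_lower_has_real_derivative)

lemma Gerf_at_bot: "(Gerf \<longlongrightarrow> 0) at_bot"
  using tendsto_divide[OF gauss_lower_at_bot tendsto_const[of "sqrt pi"]]
  by (simp add: Gerf_eq_gauss_lower)

lemma Gerf_at_top: "(Gerf \<longlongrightarrow> 1) at_top"
  using tendsto_divide[OF gauss_lower_at_top tendsto_const[of "sqrt pi"]]
  by (simp add: Gerf_eq_gauss_lower)

lemma difference_quotient_at_right_tendsto_0:
  fixes F F' :: "real \<Rightarrow> real"
  assumes "(F \<longlongrightarrow> F c) (at_right c)"
    and "eventually (\<lambda>s. (F has_real_derivative F' s) (at s)) (at_right c)"
    and "(F' \<longlongrightarrow> 0) (at_right c)"
  shows "((\<lambda>s. (F s - F c) / (s - c)) \<longlongrightarrow> 0) (at_right c)"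
proof (rule lhopital_right[where f' = F' and g' = "\<lambda>_. 1"])
  show "((\<lambda>s. F s - F c) \<longlongrightarrow> 0) (at_right c)"
    using tendsto_diff[OF assms(1) tendsto_const[of "F c"]] by simp
  show "((\<lambda>s. s - c) \<longlongrightarrow> 0) (at_right c)"
    by (auto intro!: tendsto_eq_intros simp: tendsto_ident_at)
  show "\<forall>\<^sub>F s in at_right c. s - c \<noteq> 0"
    using eventually_at_right_less[of c] by (rule eventually_mono) simp
  show "\<forall>\<^sub>F s in at_right c. ((\<lambda>s. F s - F c) has_real_derivative F' s) (at s)"
    using assms(2) by (rule eventually_mono) (auto intro!: derivative_eq_intros)
  show "\<forall>\<^sub>F s in at_right c. ((\<lambda>s. s - c) has_real_derivative 1) (at s)"
    by (intro always_eventually allI) (auto intro!: derivative_eq_intros)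
  show "((\<lambda>s. F' s / 1) \<longlongrightarrow> 0) (at_right c)"
    using assms(3) by simp
qed simp

lemma difference_quotient_at_left_tendsto_0:
  fixes F F' :: "real \<Rightarrow> real"
  assumes "(F \<longlongrightarrow> F c) (at_left c)"
    and "eventually (\<lambda>s. (F has_real_derivative F' s) (at s)) (at_left c)"
    and "(F' \<longlongrightarrow> 0) (at_left c)"
  shows "((\<lambda>s. (F s - F c) / (s - c)) \<longlongrightarrow> 0) (at_left c)"
proof (rule lhopital_left[where f' = F' and g' = "\<lambda>_. 1"])
  show "((\<lambda>s. F s - F c) \<longlongrightarrow> 0) (at_left c)"
    using tendsto_diff[OF assms(1) tendsto_const[of "F c"]] by simp
  show "((\<lambda>s. s - c) \<longlongrightarrow> 0) (at_left c)"
    by (auto intro!: tendsto_eq_intros simp: tendsto_ident_at)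
  show "\<forall>\<^sub>F s in at_left c. s - c \<noteq> 0"
    using eventually_at_left_real[of "c - 1" c] by (rule eventually_mono) auto
  show "\<forall>\<^sub>F s in at_left c. ((\<lambda>s. F s - F c) has_real_derivative F' s) (at s)"
    using assms(2) by (rule eventually_mono) (auto intro!: derivative_eq_intros)
  show "\<forall>\<^sub>F s in at_left c. ((\<lambda>s. s - c) has_real_derivative 1) (at s)"
    by (intro always_eventually allI) (auto intro!: derivative_eq_intros)
  show "((\<lambda>s. F' s / 1) \<longlongrightarrow> 0) (at_left c)"
    using assms(3) by simp
qed simp

lemma eventually_at_left_eq:
  fixes F :: "real \<Rightarrow> 'a"
  assumes "\<And>t. t \<le> c \<Longrightarrow> F t = F c"
  shows "eventually (\<lambda>s. F s = F c) (at_left c)"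
  using eventually_at_left_real[of "c - 1" c] by (rule eventually_mono) (auto intro: assms)

lemma eventually_at_right_eq:
  fixes F :: "real \<Rightarrow> 'a"
  assumes "\<And>t. c \<le> t \<Longrightarrow> F t = F c"
  shows "eventually (\<lambda>s. F s = F c) (at_right c)"
  using eventually_at_right_less[of c] by (rule eventually_mono) (auto intro: assms)

lemma difference_quotient_tendsto_0_of_eventually_eq:
  fixes F :: "real \<Rightarrow> real"
  assumes "eventually (\<lambda>s. F s = F c) G"
  shows "((\<lambda>s. (F s - F c) / (s - c)) \<longlongrightarrow> 0) G"
  using assms by (intro tendsto_eventually) (auto elim: eventually_mono)

lemma has_real_derivative_glue_01:
  fixes F F' :: "real \<Rightarrow> real"
  assumes left: "\<And>t. t \<le> 0 \<Longrightarrow> F t = F 0" and right: "\<And>t. 1 \<le> t \<Longrightarrow> F t = F 1"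
    and inner: "\<And>t. 0 < t \<Longrightarrow> t < 1 \<Longrightarrow> (F has_real_derivative F' t) (at t)"
    and outer: "\<And>t. t \<le> 0 \<or> 1 \<le> t \<Longrightarrow> F' t = 0"
    and F0: "(F \<longlongrightarrow> F 0) (at_right 0)" and F1: "(F \<longlongrightarrow> F 1) (at_left 1)"
    and F'0: "(F' \<longlongrightarrow> 0) (at_right 0)" and F'1: "(F' \<longlongrightarrow> 0) (at_left 1)"
  shows "(F has_real_derivative F' t) (at t)"
proof -
  have inner_right: "eventually (\<lambda>s. (F has_real_derivative F' s) (at s)) (at_right 0)"
    using eventually_at_right_real[of 0 1] by (rule eventually_mono) (auto intro: inner)
  have inner_left: "eventually (\<lambda>s. (F has_real_derivative F' s) (at s)) (at_left 1)"
    using eventually_at_left_real[of 0 1] by (rule eventually_mono) (auto intro: inner)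
  consider "t < 0" | "t = 0" | "0 < t \<and> t < 1" | "t = 1" | "1 < t" by linarith
  then show ?thesis
  proof cases
    case 1
    have "((\<lambda>_. F 0) has_real_derivative 0) (at t)" by simp
    then have "(F has_real_derivative 0) (at t)"
      by (rule has_field_derivative_transform_within_open[where S="{..<0}"]) (use 1 in \<open>auto intro: left[symmetric]\<close>)
    then show ?thesis
      using 1 outer by simp
  next
    case 2
    have "((\<lambda>s. (F s - F 0) / (s - 0)) \<longlongrightarrow> 0) (at 0)"
      using difference_quotient_tendsto_0_of_eventually_eq[OF
          eventually_at_left_eq[where c=0 and F=F, OF left]]
        difference_quotient_at_right_tendsto_0[OF F0 inner_right F'0]
      by (rule filterlim_split_at)
    then show ?thesis
      using 2 outer by (simp add: has_field_derivative_iff)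
  next
    case 3
    then show ?thesis by (simp add: inner)
  next
    case 4
    have "((\<lambda>s. (F s - F 1) / (s - 1)) \<longlongrightarrow> 0) (at 1)"
      using difference_quotient_at_left_tendsto_0[OF F1 inner_left F'1]
        difference_quotient_tendsto_0_of_eventually_eq[OF
          eventually_at_right_eq[where c=1 and F=F, OF right]]
      by (rule filterlim_split_at)
    then show ?thesis
      using 4 outer by (simp add: has_field_derivative_iff)
  next
    case 5
    have "((\<lambda>_. F 1) has_real_derivative 0) (at t)" by simp
    then have "(F has_real_derivative 0) (at t)"
      by (rule has_field_derivative_transform_within_open[where S="{1<..}"]) (use 5 in \<open>auto intro: right[symmetric]\<close>)
    then show ?thesis
      using 5 outer by simp
  qed
qed

lemma isCont_glue_01:
  fixes F :: "real \<Rightarrow> real"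
  assumes left: "\<And>t. t \<le> 0 \<Longrightarrow> F t = F 0" and right: "\<And>t. 1 \<le> t \<Longrightarrow> F t = F 1"
    and inner: "\<And>t. 0 < t \<Longrightarrow> t < 1 \<Longrightarrow> isCont F t"
    and F0: "(F \<longlongrightarrow> F 0) (at_right 0)" and F1: "(F \<longlongrightarrow> F 1) (at_left 1)"
  shows "isCont F t"
proof -
  consider "t < 0" | "t = 0" | "0 < t \<and> t < 1" | "t = 1" | "1 < t" by linarith
  then show ?thesis
  proof cases
    case 1
    have "eventually (\<lambda>s. F s = F 0) (nhds t)"
      using eventually_nhds_in_open[of "{..<0}" t] 1 by (auto elim!: eventually_mono intro: left)
    then show ?thesis by (simp add: isCont_cong)
  next
    case 2
    then show ?thesis
      using tendsto_eventually[OF eventually_at_left_eq[where c=0 and F=F, OF left]] F0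
      by (simp add: isCont_def filterlim_split_at)
  next
    case 3
    then show ?thesis by (simp add: inner)
  next
    case 4
    then show ?thesis
      using tendsto_eventually[OF eventually_at_right_eq[where c=1 and F=F, OF right]] F1
      by (simp add: isCont_def filterlim_split_at)
  next
    case 5
    have "eventually (\<lambda>s. F s = F 1) (nhds t)"
      using eventually_nhds_in_open[of "{1<..}" t] 5 by (auto elim!: eventually_mono intro: right)
    then show ?thesis by (simp add: isCont_cong)
  qed
qed

text \<open>On \<open>(0, 1)\<close> the \<open>n\<close>-th derivative of \<open>theta\<close> is \<open>theta_profile n\<close> evaluated at
  \<open>s = tan (pi * (t - 1/2))\<close>; since \<open>ds/dt = pi * (1 + s\<^sup>2)\<close>, each profile is \<open>pi * (1 + s\<^sup>2)\<close>
  times the derivative of the previous one.\<close>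

fun theta_profile :: "nat \<Rightarrow> real \<Rightarrow> real" where
  "theta_profile 0 s = 1 - Gerf s"
| "theta_profile (Suc 0) s = - sqrt pi * (1 + s\<^sup>2) * gauss s"
| "theta_profile (Suc (Suc 0)) s = 2 * pi * sqrt pi * s ^ 3 * (1 + s\<^sup>2) * gauss s"
| "theta_profile (Suc (Suc (Suc _))) s =
     2 * pi\<^sup>2 * sqrt pi * (1 + s\<^sup>2) * (3 * s\<^sup>2 + 3 * s ^ 4 - 2 * s ^ 6) * gauss s"

definition theta_deriv :: "nat \<Rightarrow> real \<Rightarrow> real" where
  "theta_deriv n t =
     (if 0 < t \<and> t < 1 then theta_profile n (tan (pi * (t - 1/2)))
      else if n = 0 \<and> t \<le> 0 then 1 else 0)"

lemma theta_deriv_0: "theta_deriv 0 = theta"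
  by (simp add: fun_eq_iff theta_deriv_def theta_def)

lemma theta_deriv_eq_0: "0 < n \<Longrightarrow> t \<le> 0 \<or> 1 \<le> t \<Longrightarrow> theta_deriv n t = 0"
  by (auto simp: theta_deriv_def)

lemma one_plus_square_neq_0 [simp]: "1 + (x::real)\<^sup>2 \<noteq> 0"
  by (metis add_pos_nonneg less_irrefl zero_le_power2 zero_less_one)

lemma theta_profile_fun_eqs:
  "theta_profile 0 = (\<lambda>s. 1 - Gerf s)"
  "theta_profile (Suc 0) = (\<lambda>s. - sqrt pi * (1 + s\<^sup>2) * gauss s)"
  "theta_profile (Suc (Suc 0)) = (\<lambda>s. 2 * pi * sqrt pi * s ^ 3 * (1 + s\<^sup>2) * gauss s)"
  by (simp_all add: fun_eq_iff)

lemma theta_profile_has_real_derivative: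
  assumes "n < 3"
  shows "(theta_profile n has_real_derivative theta_profile (Suc n) s / (pi * (1 + s\<^sup>2))) (at s)"
proof -
  have nz: "pi * (1 + s\<^sup>2) \<noteq> 0"
    by simp
  have "n = 0 \<or> n = Suc 0 \<or> n = Suc (Suc 0)"
    using assms by auto
  then show ?thesis
  proof (elim disjE)
    assume "n = 0"
    have "((\<lambda>s. 1 - Gerf s) has_real_derivative - (gauss s / sqrt pi)) (at s)"
      by (auto intro!: derivative_eq_intros Gerf_has_real_derivative)
    moreover have "- sqrt pi * (1 + s\<^sup>2) * gauss s / (pi * (1 + s\<^sup>2)) = - (gauss s / (pi / sqrt pi))"
      using nz by simp
    ultimately show ?thesis
      using \<open>n = 0\<close> by (simp add: theta_profile_fun_eqs real_div_sqrt)
  next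
    assume "n = Suc 0"
    have "((\<lambda>s. - sqrt pi * (1 + s\<^sup>2) * gauss s) has_real_derivative 2 * sqrt pi * s ^ 3 * gauss s) (at s)"
      by (auto intro!: derivative_eq_intros simp: algebra_simps power2_eq_square power3_eq_cube)
    moreover have "2 * sqrt pi * s ^ 3 * gauss s = theta_profile (Suc (Suc 0)) s / (pi * (1 + s\<^sup>2))"
      using nz by (simp add: field_simps)
    ultimately show ?thesis
      using \<open>n = Suc 0\<close> by (simp add: theta_profile_fun_eqs)
  next
    assume "n = Suc (Suc 0)"
    have "((\<lambda>s. 2 * pi * sqrt pi * s ^ 3 * (1 + s\<^sup>2) * gauss s) has_real_derivative
        2 * pi * sqrt pi * (3 * s\<^sup>2 + 3 * s ^ 4 - 2 * s ^ 6) * gauss s) (at s)"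
      by (auto intro!: derivative_eq_intros simp: algebra_simps power2_eq_square power3_eq_cube
          eval_nat_numeral)
    moreover have "2 * pi * sqrt pi * (3 * s\<^sup>2 + 3 * s ^ 4 - 2 * s ^ 6) * gauss s
        = theta_profile (Suc (Suc (Suc 0))) s / (pi * (1 + s\<^sup>2))"
      using nz by (simp add: field_simps power2_eq_square)
    ultimately show ?thesis
      using \<open>n = Suc (Suc 0)\<close> by (simp add: theta_profile_fun_eqs)
  qed
qed

lemma tan_shifted_has_real_derivative:
  assumes "0 < t" "t < 1"
  shows "((\<lambda>t. tan (pi * (t - 1/2))) has_real_derivative pi * (1 + (tan (pi * (t - 1/2)))\<^sup>2)) (at t)"
proof -
  have "0 < cos (pi * (t - 1/2))"
    using assms by (intro cos_gt_zero_pi) (auto simp: algebra_simps)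
  then show ?thesis
    by (auto intro!: derivative_eq_intros simp: tan_sec power_inverse)
qed

lemma theta_deriv_has_real_derivative_inner:
  assumes "n < 3" "0 < t" "t < 1"
  shows "(theta_deriv n has_real_derivative theta_deriv (Suc n) t) (at t)"
proof -
  have "((\<lambda>t. theta_profile n (tan (pi * (t - 1/2)))) has_real_derivative
      theta_profile (Suc n) (tan (pi * (t - 1/2)))) (at t)"
    using DERIV_chain2[OF theta_profile_has_real_derivative[OF assms(1)]
        tan_shifted_has_real_derivative[OF assms(2,3)]]
    by simp
  then have "((\<lambda>t. theta_profile n (tan (pi * (t - 1/2)))) has_real_derivative theta_deriv (Suc n) t) (at t)"
    using assms by (simp add: theta_deriv_def)
  then show ?thesis
    by (rule has_field_derivative_transform_within_open[where S="{0<..<1}"])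
       (use assms in \<open>auto simp: theta_deriv_def\<close>)
qed

lemma theta_profile_limits:
  "((\<lambda>t. theta_profile n (tan (pi * (t - 1/2)))) \<longlongrightarrow> theta_deriv n 0) (at_right 0)"
  "((\<lambda>t. theta_profile n (tan (pi * (t - 1/2)))) \<longlongrightarrow> theta_deriv n 1) (at_left 1)"
proof -
  have tan_bot: "filterlim (\<lambda>t. tan (pi * (t - 1/2))) at_bot (at_right (0::real))"
    by real_asymp
  have tan_top: "filterlim (\<lambda>t. tan (pi * (t - 1/2))) at_top (at_left (1::real))"
    by real_asymp
  consider "n = 0" | "n = Suc 0" | "n = Suc (Suc 0)" | m where "n = Suc (Suc (Suc m))"
    by (metis not0_implies_Suc)
  then have "((\<lambda>t. theta_profile n (tan (pi * (t - 1/2)))) \<longlongrightarrow> theta_deriv n 0) (at_right 0) \<and>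
      ((\<lambda>t. theta_profile n (tan (pi * (t - 1/2)))) \<longlongrightarrow> theta_deriv n 1) (at_left 1)"
  proof cases
    case 1
    then show ?thesis
      using tendsto_diff[OF tendsto_const filterlim_compose[OF Gerf_at_bot tan_bot], of 1]
        tendsto_diff[OF tendsto_const filterlim_compose[OF Gerf_at_top tan_top], of 1]
      by (simp add: theta_deriv_def)
  qed (intro conjI; simp add: theta_deriv_def; real_asymp)+
  then show "((\<lambda>t. theta_profile n (tan (pi * (t - 1/2)))) \<longlongrightarrow> theta_deriv n 0) (at_right 0)"
    "((\<lambda>t. theta_profile n (tan (pi * (t - 1/2)))) \<longlongrightarrow> theta_deriv n 1) (at_left 1)"
    by auto
qed

lemma theta_deriv_limits:
  "(theta_deriv n \<longlongrightarrow> theta_deriv n 0) (at_right 0)"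
  "(theta_deriv n \<longlongrightarrow> theta_deriv n 1) (at_left 1)"
proof -
  have "eventually (\<lambda>t. theta_profile n (tan (pi * (t - 1/2))) = theta_deriv n t) (at_right 0)"
    using eventually_at_right_real[of 0 1] by (rule eventually_mono) (auto simp: theta_deriv_def)
  from tendsto_cong[OF this] theta_profile_limits(1)[of n]
  show "(theta_deriv n \<longlongrightarrow> theta_deriv n 0) (at_right 0)" by simp
  have "eventually (\<lambda>t. theta_profile n (tan (pi * (t - 1/2))) = theta_deriv n t) (at_left 1)"
    using eventually_at_left_real[of 0 1] by (rule eventually_mono) (auto simp: theta_deriv_def)
  from tendsto_cong[OF this] theta_profile_limits(2)[of n]
  show "(theta_deriv n \<longlongrightarrow> theta_deriv n 1) (at_left 1)" by simp
qed

lemma theta_deriv_outside: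
  "t \<le> 0 \<Longrightarrow> theta_deriv n t = theta_deriv n 0" "1 \<le> t \<Longrightarrow> theta_deriv n t = theta_deriv n 1"
  by (simp_all add: theta_deriv_def)

lemma isCont_theta_deriv: "isCont (theta_deriv n) t"
proof (rule isCont_glue_01[OF theta_deriv_outside _ theta_deriv_limits])
  fix t :: real
  assume t: "0 < t" "t < 1"
  have tan: "isCont (\<lambda>t. tan (pi * (t - 1/2))) t"
    using DERIV_isCont[OF tan_shifted_has_real_derivative[OF t]] .
  have "isCont (\<lambda>t. theta_profile n (tan (pi * (t - 1/2)))) t"
  proof -
    consider "n = 0" | "n = Suc 0" | "n = Suc (Suc 0)" | m where "n = Suc (Suc (Suc m))"
      by (metis not0_implies_Suc)
    then show ?thesis
      by cases (auto intro!: continuous_intros tan isCont_o2[OF tan DERIV_isCont[OF Gerf_has_real_derivative]])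
  qed
  then show "isCont (theta_deriv n) t"
    by (rule isCont_cong[THEN iffD1, rotated])
       (use eventually_nhds_in_open[of "{0<..<1}" t] t in \<open>auto elim!: eventually_mono simp: theta_deriv_def\<close>)
qed

lemma theta_deriv_has_real_derivative:
  "n < 3 \<Longrightarrow> (theta_deriv n has_real_derivative theta_deriv (Suc n) t) (at t)"
  by (rule has_real_derivative_glue_01[OF theta_deriv_outside theta_deriv_has_real_derivative_inner
        theta_deriv_eq_0 theta_deriv_limits])
     (use theta_deriv_limits[of "Suc n"] theta_deriv_eq_0[of "Suc n"] in auto)

lemma theta_deriv_bounded: "\<exists>B\<ge>1. \<forall>n\<le>3. \<forall>t. \<bar>theta_deriv n t\<bar> \<le> B"
proof -
  have "\<exists>B. \<forall>t. \<bar>theta_deriv n t\<bar> \<le> B" for n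
  proof -
    have "compact (theta_deriv n ` {0..1})"
      by (intro compact_continuous_image continuous_at_imp_continuous_on ballI isCont_theta_deriv)
         simp
    then obtain B where "\<And>t. t \<in> {0..1} \<Longrightarrow> \<bar>theta_deriv n t\<bar> \<le> B"
      by (metis bounded_iff compact_imp_bounded image_eqI real_norm_def)
    moreover have "t \<notin> {0..1} \<Longrightarrow> \<bar>theta_deriv n t\<bar> \<le> 1" for t
      by (auto simp: theta_deriv_def)
    ultimately show ?thesis
      by (metis max.coboundedI1 max.coboundedI2)
  qed
  then obtain B where B: "\<And>n t. \<bar>theta_deriv n t\<bar> \<le> B n"
    by metis
  show ?thesis
    by (rule exI[of _ "max 1 (Max (B ` {..3}))"])
       (auto intro: order.trans[OF B] simp: le_max_iff_disj)
qed

section \<open>Derivatives of separated functions\<close>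

definition derivs_upto :: "nat \<Rightarrow> (nat \<Rightarrow> real \<Rightarrow> real) \<Rightarrow> bool" where
  "derivs_upto N F \<longleftrightarrow> (\<forall>n<N. \<forall>t. (F n has_real_derivative F (Suc n) t) (at t))"

lemma derivs_uptoD: "derivs_upto N F \<Longrightarrow> n < N \<Longrightarrow> (F n has_real_derivative F (Suc n) t) (at t)"
  by (simp add: derivs_upto_def)

lemma derivs_upto_theta_deriv: "derivs_upto 3 theta_deriv"
  by (simp add: derivs_upto_def theta_deriv_has_real_derivative)

definition cos_derivs :: "real \<Rightarrow> nat \<Rightarrow> real \<Rightarrow> real" where
  "cos_derivs \<kappa> n x = \<kappa> ^ n * cos (\<kappa> * x + n * (pi / 2))"

lemma cos_derivs_0 [simp]: "cos_derivs \<kappa> 0 x = cos (\<kappa> * x)"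
  by (simp add: cos_derivs_def)

lemma derivs_upto_cos_derivs: "derivs_upto N (cos_derivs \<kappa>)"
  unfolding derivs_upto_def
proof (intro allI impI)
  fix n x
  have "cos (\<kappa> * x + real (Suc n) * (pi / 2)) = cos ((\<kappa> * x + real n * (pi / 2)) + pi / 2)"
    by (simp add: field_simps)
  then have "\<kappa> ^ n * (- sin (\<kappa> * x + real n * (pi / 2)) * \<kappa>) = cos_derivs \<kappa> (Suc n) x"
    by (simp add: cos_derivs_def cos_add)
  moreover have "(cos_derivs \<kappa> n has_real_derivative
      \<kappa> ^ n * (- sin (\<kappa> * x + real n * (pi / 2)) * \<kappa>)) (at x)"
    unfolding cos_derivs_def[abs_def] by (auto intro!: derivative_eq_intros)
  ultimately show "(cos_derivs \<kappa> n has_real_derivative cos_derivs \<kappa> (Suc n) x) (at x)"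
    by simp
qed

lemma abs_cos_derivs_le: "\<bar>cos_derivs \<kappa> n x\<bar> \<le> \<bar>\<kappa>\<bar> ^ n"
  by (simp add: cos_derivs_def abs_mult power_abs mult_left_le)

lemma derivs_upto_rescale:
  assumes "derivs_upto N F" "w \<noteq> 0"
  shows "derivs_upto N (\<lambda>n t. F n ((t - c) / w) / w ^ n)"
  unfolding derivs_upto_def
  using assms by (auto intro!: derivative_eq_intros DERIV_chain2[OF derivs_uptoD[OF assms(1)]])

lemma derivs_upto_const_minus:
  "derivs_upto N F \<Longrightarrow> derivs_upto N (\<lambda>n t. (if n = 0 then c else 0) - F n t)"
  unfolding derivs_upto_def by (auto intro!: derivative_eq_intros)

text \<open>The derivatives of \<open>F 0 t * exp (- \<kappa> * t)\<close> are \<open>((d/dt - \<kappa>)\<^sup>n F 0) t * exp (- \<kappa> * t)\<close>.\<close>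

definition damp_step :: "real \<Rightarrow> (nat \<Rightarrow> real \<Rightarrow> real) \<Rightarrow> nat \<Rightarrow> real \<Rightarrow> real" where
  "damp_step \<kappa> F n t = F (Suc n) t - \<kappa> * F n t"

definition damped_derivs :: "real \<Rightarrow> (nat \<Rightarrow> real \<Rightarrow> real) \<Rightarrow> nat \<Rightarrow> real \<Rightarrow> real" where
  "damped_derivs \<kappa> F n t = (damp_step \<kappa> ^^ n) F 0 t * exp (- \<kappa> * t)"

lemma damped_derivs_0 [simp]: "damped_derivs \<kappa> F 0 t = F 0 t * exp (- \<kappa> * t)"
  by (simp add: damped_derivs_def)

lemma derivs_upto_damp_step: "derivs_upto (Suc N) F \<Longrightarrow> derivs_upto N (damp_step \<kappa> F)"
  unfolding derivs_upto_def damp_step_def by (auto intro!: derivative_eq_intros)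

lemma derivs_upto_damp_step_iter:
  "derivs_upto N F \<Longrightarrow> derivs_upto (N - n) ((damp_step \<kappa> ^^ n) F)"
proof (induction n)
  case (Suc n)
  show ?case
  proof (cases "N - n")
    case 0
    then show ?thesis by (simp add: derivs_upto_def)
  next
    case (Suc M)
    then have "N - Suc n = M"
      by arith
    then show ?thesis
      using Suc Suc.IH[OF Suc.prems] by (simp add: derivs_upto_damp_step)
  qed
qed simp

lemma derivs_upto_damped:
  assumes "derivs_upto N F"
  shows "derivs_upto N (damped_derivs \<kappa> F)"
  unfolding derivs_upto_def
proof (intro allI impI)
  fix n t
  assume "n < N"
  with assms have "derivs_upto (N - n) ((damp_step \<kappa> ^^ n) F)" "0 < N - n"
    by (auto intro: derivs_upto_damp_step_iter)
  then have "((damp_step \<kappa> ^^ n) F 0 has_real_derivative (damp_step \<kappa> ^^ n) F 1 t) (at t)"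
    using derivs_uptoD[of "N - n" "(damp_step \<kappa> ^^ n) F" 0] by simp
  then show "(damped_derivs \<kappa> F n has_real_derivative damped_derivs \<kappa> F (Suc n) t) (at t)"
    unfolding damped_derivs_def[abs_def]
    by (auto intro!: derivative_eq_intros simp: damp_step_def algebra_simps)
qed

lemma abs_damp_step_iter_le:
  assumes "\<And>j. j \<le> n + m \<Longrightarrow> \<bar>F j t\<bar> \<le> K * \<mu> ^ j" "\<bar>\<kappa>\<bar> \<le> \<mu>" "j \<le> m"
  shows "\<bar>(damp_step \<kappa> ^^ n) F j t\<bar> \<le> 2 ^ n * K * \<mu> ^ (n + j)"
  using assms(1,3)
proof (induction n arbitrary: F K j)
  case 0
  then show ?case by simp
next
  case (Suc n)
  have "\<bar>damp_step \<kappa> F i t\<bar> \<le> (2 * K * \<mu>) * \<mu> ^ i" if "i \<le> n + m" for i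
  proof -
    have "\<bar>damp_step \<kappa> F i t\<bar> \<le> \<bar>F (Suc i) t\<bar> + \<mu> * \<bar>F i t\<bar>"
      unfolding damp_step_def using assms(2)
      by (metis abs_ge_zero abs_mult abs_triangle_ineq4 add_left_mono mult_right_mono order.trans)
    also have "\<dots> \<le> K * \<mu> ^ Suc i + \<mu> * (K * \<mu> ^ i)"
      using Suc.prems(1)[of "Suc i"] Suc.prems(1)[of i] that assms(2)
      by (intro add_mono mult_left_mono) auto
    finally show ?thesis by simp
  qed
  then have "\<bar>(damp_step \<kappa> ^^ n) (damp_step \<kappa> F) j t\<bar> \<le> 2 ^ n * (2 * K * \<mu>) * \<mu> ^ (n + j)"
    using Suc.prems(2) by (intro Suc.IH) auto
  then show ?case
    by (simp add: funpow_Suc_right algebra_simps del: funpow.simps)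
qed

lemma abs_damped_derivs_le:
  assumes "\<And>j. j \<le> n \<Longrightarrow> \<bar>F j t\<bar> \<le> K * \<mu> ^ j" "\<bar>\<kappa>\<bar> \<le> \<mu>"
  shows "\<bar>damped_derivs \<kappa> F n t\<bar> \<le> 2 ^ n * K * \<mu> ^ n * exp (- \<kappa> * t)"
  using abs_damp_step_iter_le[of n 0 F t K \<mu> \<kappa> 0] assms
  by (simp add: damped_derivs_def abs_mult mult_right_mono)

lemma pd_eqI:
  "((\<lambda>s. F s y t) has_vector_derivative D) (at x) \<Longrightarrow> pd 0 F x y t = D"
  "((\<lambda>s. F x s t) has_vector_derivative D) (at y) \<Longrightarrow> pd 1 F x y t = D"
  "((\<lambda>s. F x y s) has_vector_derivative D) (at t) \<Longrightarrow> pd 2 F x y t = D"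
  unfolding pd_def by (simp_all add: vector_derivative_at)

lemma pd_real_eqI:
  "((\<lambda>s. F s y t) has_real_derivative D) (at x) \<Longrightarrow> pd 0 F x y t = D"
  "((\<lambda>s. F x s t) has_real_derivative D) (at y) \<Longrightarrow> pd 1 F x y t = D"
  "((\<lambda>s. F x y s) has_real_derivative D) (at t) \<Longrightarrow> pd 2 F x y t = D"
  by (rule pd_eqI; simp add: has_real_derivative_iff_has_vector_derivative)+

lemma pd_eq_of_has_derivative:
  fixes F :: "real \<Rightarrow> real \<Rightarrow> real \<Rightarrow> 'a::real_normed_vector"
  assumes "((\<lambda>(x, y, t). F x y t) has_derivative
      (\<lambda>h. fst h *\<^sub>R Fx + fst (snd h) *\<^sub>R Fy + snd (snd h) *\<^sub>R Ft)) (at (x, y, t))"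
  shows "pd 0 F x y t = Fx" "pd 1 F x y t = Fy" "pd 2 F x y t = Ft"
proof -
  have "((\<lambda>s. (s, y, t)) has_derivative (\<lambda>h. (h, 0, 0))) (at x)"
    "((\<lambda>s. (x, s, t)) has_derivative (\<lambda>h. (0, h, 0))) (at y)"
    "((\<lambda>s. (x, y, s)) has_derivative (\<lambda>h. (0, 0, h))) (at t)"
    by (auto intro!: derivative_eq_intros simp: zero_prod_def)
  from this[THEN has_derivative_compose, OF assms] show
    "pd 0 F x y t = Fx" "pd 1 F x y t = Fy" "pd 2 F x y t = Ft"
    by (intro pd_eqI; simp add: has_vector_derivative_def)+
qed

text \<open>\<open>sep_derivs Ts is\<close> is the partial derivative in the directions \<open>is\<close> of
  \<open>\<Sum>(P, Q, R) \<leftarrow> Ts. P 0 x * Q 0 y * R 0 t\<close>, where \<open>P n\<close> stands for the \<open>n\<close>-th derivative of \<open>P 0\<close>.\<close>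

definition sep_derivs :: "((nat \<Rightarrow> real \<Rightarrow> real) \<times> (nat \<Rightarrow> real \<Rightarrow> real) \<times> (nat \<Rightarrow> real \<Rightarrow> real)) list
    \<Rightarrow> nat list \<Rightarrow> real \<Rightarrow> real \<Rightarrow> real \<Rightarrow> real" where
  "sep_derivs Ts is x y t =
     (\<Sum>(P, Q, R) \<leftarrow> Ts. P (count_list is 0) x * Q (count_list is 1) y * R (count_list is 2) t)"

lemma has_real_derivative_sum_list:
  "(\<And>p. p \<in> set ps \<Longrightarrow> (f p has_real_derivative f' p) (at x)) \<Longrightarrow>
    ((\<lambda>x. \<Sum>p\<leftarrow>ps. f p x) has_real_derivative (\<Sum>p\<leftarrow>ps. f' p)) (at x)"
  by (induction ps) (auto intro!: derivative_eq_intros)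

lemma pd_sep_derivs:
  assumes "i \<le> 2" and towers: "\<forall>(P, Q, R) \<in> set Ts. derivs_upto N P \<and> derivs_upto N Q \<and> derivs_upto N R"
    and "length is < N"
  shows "pd i (sep_derivs Ts is) = sep_derivs Ts (i # is)"
proof (intro ext)
  fix x y t
  have count: "count_list is j < N" for j
    using count_le_length[of "is" j] assms(3) by linarith
  have D: "(fst p (count_list is 0) has_real_derivative fst p (Suc (count_list is 0)) x) (at x)"
    "(fst (snd p) (count_list is (Suc 0)) has_real_derivative fst (snd p) (Suc (count_list is (Suc 0))) y) (at y)"
    "(snd (snd p) (count_list is 2) has_real_derivative snd (snd p) (Suc (count_list is 2)) t) (at t)"
    if "p \<in> set Ts" for p
    using towers that count by (auto intro!: derivs_uptoD)
  have "pd 0 (sep_derivs Ts is) x y t = sep_derivs Ts (0 # is) x y t"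
    unfolding sep_derivs_def case_prod_unfold
    by (rule pd_real_eqI(1), rule has_real_derivative_sum_list) (auto intro!: derivative_eq_intros D)
  moreover have "pd 1 (sep_derivs Ts is) x y t = sep_derivs Ts (1 # is) x y t"
    unfolding sep_derivs_def case_prod_unfold
    by (rule pd_real_eqI(2), rule has_real_derivative_sum_list) (auto intro!: derivative_eq_intros D)
  moreover have "pd 2 (sep_derivs Ts is) x y t = sep_derivs Ts (2 # is) x y t"
    unfolding sep_derivs_def case_prod_unfold
    by (rule pd_real_eqI(3), rule has_real_derivative_sum_list) (auto intro!: derivative_eq_intros D)
  moreover have "i = 0 \<or> i = 1 \<or> i = 2"
    using assms(1) by auto
  ultimately show "pd i (sep_derivs Ts is) x y t = sep_derivs Ts (i # is) x y t"
    by auto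
qed

lemma pderivs_sep_derivs:
  assumes "set is \<subseteq> {0, 1, 2}" "length is \<le> N"
    and "\<forall>(P, Q, R) \<in> set Ts. derivs_upto N P \<and> derivs_upto N Q \<and> derivs_upto N R"
  shows "pderivs is (sep_derivs Ts []) = sep_derivs Ts is"
  using assms(1,2)
proof (induction "is")
  case Nil
  then show ?case by (simp add: pderivs_def)
next
  case (Cons i "is")
  then have "i \<le> 2" "length is < N"
    by auto
  then show ?case
    using Cons by (simp add: pderivs_def pd_sep_derivs[OF _ assms(3)])
qed

lemma count_list_directions:
  "set is \<subseteq> {0, 1, 2} \<Longrightarrow> count_list is 0 + count_list is 1 + count_list is (2::nat) = length is"
  by (induction "is") auto

lemma power_zero_factor_le:
  fixes a c :: real
  assumes "0 \<le> a" "a \<le> c"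
  shows "a ^ i * 0 ^ j * c ^ l \<le> c ^ (i + j + l)"
proof (cases j)
  case 0
  then show ?thesis
    using assms by (simp add: power_add mult_right_mono power_mono)
next
  case (Suc j')
  then show ?thesis
    using assms by simp
qed

lemma has_derivative_separable:
  fixes R :: "real \<Rightarrow> 'a::real_normed_vector"
  assumes "(P has_real_derivative P') (at x)" "(Q has_real_derivative Q') (at y)"
    and "(R has_vector_derivative R') (at t)"
  shows "((\<lambda>(x, y, t). (P x * Q y) *\<^sub>R R t) has_derivative
    (\<lambda>h. fst h *\<^sub>R ((P' * Q y) *\<^sub>R R t) + fst (snd h) *\<^sub>R ((P x * Q') *\<^sub>R R t)
       + snd (snd h) *\<^sub>R ((P x * Q y) *\<^sub>R R'))) (at (x, y, t))"
proof -
  have "((\<lambda>p. P (fst p)) has_derivative (\<lambda>h. fst h * P')) (at (x, y, t))"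
    using assms(1) by (intro DERIV_compose_FDERIV[where g=fst] has_derivative_fst[OF has_derivative_ident]) simp
  moreover have "((\<lambda>p. Q (fst (snd p))) has_derivative (\<lambda>h. fst (snd h) * Q')) (at (x, y, t))"
    using assms(2)
    by (intro DERIV_compose_FDERIV[where g="\<lambda>p. fst (snd p)"]
        has_derivative_fst[OF has_derivative_snd[OF has_derivative_ident]]) simp
  moreover have "(R has_derivative (\<lambda>h. h *\<^sub>R R')) (at (snd (snd (x, y, t))))"
    using assms(3) by (simp add: has_vector_derivative_def)
  from has_derivative_compose[OF has_derivative_snd[OF has_derivative_snd[OF has_derivative_ident]] this]
  have "((\<lambda>p. R (snd (snd p))) has_derivative (\<lambda>h. snd (snd h) *\<^sub>R R')) (at (x, y, t))"
    by simp
  ultimately have "((\<lambda>p. (P (fst p) * Q (fst (snd p))) *\<^sub>R R (snd (snd p))) has_derivative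
    (\<lambda>h. fst h *\<^sub>R ((P' * Q y) *\<^sub>R R t) + fst (snd h) *\<^sub>R ((P x * Q') *\<^sub>R R t)
       + snd (snd h) *\<^sub>R ((P x * Q y) *\<^sub>R R'))) (at (x, y, t))"
    by (rule has_derivative_eq_rhs[OF has_derivative_scaleR[OF has_derivative_mult]])
       (auto simp: fun_eq_iff algebra_simps)
  then show ?thesis
    by (simp add: case_prod_unfold)
qed

lemma C1_fun3I:
  fixes F :: "real \<Rightarrow> real \<Rightarrow> real \<Rightarrow> 'a::real_normed_vector"
  assumes "\<And>x y t. ((\<lambda>(x, y, t). F x y t) has_derivative
      (\<lambda>h. fst h *\<^sub>R Fx x y t + fst (snd h) *\<^sub>R Fy x y t + snd (snd h) *\<^sub>R Ft x y t)) (at (x, y, t))"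
    and "continuous_on UNIV (\<lambda>p. Fx (fst p) (fst (snd p)) (snd (snd p)))"
    and "continuous_on UNIV (\<lambda>p. Fy (fst p) (fst (snd p)) (snd (snd p)))"
    and "continuous_on UNIV (\<lambda>p. Ft (fst p) (fst (snd p)) (snd (snd p)))"
  shows "C1_fun3 F"
proof -
  define D where "D p = (blinfun_scaleR_left (Fx (fst p) (fst (snd p)) (snd (snd p))) o\<^sub>L fst_blinfun)
    + (blinfun_scaleR_left (Fy (fst p) (fst (snd p)) (snd (snd p))) o\<^sub>L (fst_blinfun o\<^sub>L snd_blinfun))
    + (blinfun_scaleR_left (Ft (fst p) (fst (snd p)) (snd (snd p))) o\<^sub>L (snd_blinfun o\<^sub>L snd_blinfun))"
    for p
  have "((\<lambda>(x, y, t). F x y t) has_derivative blinfun_apply (D p)) (at p)" for p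
  proof -
    obtain x y t where p: "p = (x, y, t)"
      by (metis prod.collapse)
    have "blinfun_apply (D p)
        = (\<lambda>h. fst h *\<^sub>R Fx x y t + fst (snd h) *\<^sub>R Fy x y t + snd (snd h) *\<^sub>R Ft x y t)"
      by (auto simp: D_def blinfun.add_left p)
    then show ?thesis
      using assms(1)[of x y t] p by simp
  qed
  moreover have "continuous_on UNIV D"
    unfolding D_def[abs_def] using assms(2-4) by (intro continuous_intros) auto
  ultimately show ?thesis
    unfolding C1_fun3_def by blast
qed

section \<open>The transition between the two harmonic functions\<close>

lemma abs_diff_double_le:
  fixes X1 X2 \<kappa> \<mu> \<Lambda> :: real
  assumes "\<bar>X1\<bar> \<le> \<mu>" "\<bar>X2\<bar> \<le> \<mu> * \<Lambda>" "0 \<le> \<kappa>" "\<kappa> \<le> \<Lambda>"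
  shows "\<bar>X2 - 2 * \<kappa> * X1\<bar> \<le> 3 * \<mu> * \<Lambda>"
proof -
  have "\<bar>X2 - 2 * \<kappa> * X1\<bar> \<le> \<bar>X2\<bar> + 2 * \<kappa> * \<bar>X1\<bar>"
    using assms(3) by (simp add: abs_mult order.trans[OF abs_triangle_ineq4])
  also have "\<dots> \<le> \<mu> * \<Lambda> + 2 * \<Lambda> * \<mu>"
    using assms by (intro add_mono mult_mono) auto
  finally show ?thesis
    by (simp add: algebra_simps)
qed

text \<open>The equation of part (a) after differentiation: the first group is \<open>u\<^sub>t\<^sub>t\<close>, the other two are
  the \<open>x\<close>- and \<open>y\<close>-derivatives of the components of \<open>A \<nabla>u\<close>.\<close>

lemma pde_cancellation:
  fixes K K' s1 c1 s2 c2 a0 a1 a2 b0 b1 b2 Cg Cf E1 E2 :: real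
  assumes "s1\<^sup>2 + c1\<^sup>2 = 1" "s2\<^sup>2 + c2\<^sup>2 = 1"
    and "K / 2 * Cg * a0 * E1 = (b2 - 2 * K' * b1) * E2"
    and "K' / 2 * Cf * b0 * E2 = (a2 - 2 * K * a1) * E1"
  shows "(c1 * (a2 - 2 * K * a1 + K\<^sup>2 * a0) * E1 + c2 * (b2 - 2 * K' * b1 + K'\<^sup>2 * b0) * E2)
    + (- (K\<^sup>2 * c1 * a0 * E1) + K / 2 * Cg * a0 * E1 * c2 * (s1\<^sup>2 - c1\<^sup>2) - K' * c1 * s2\<^sup>2 * Cf * b0 * E2)
    + (- (K * s1\<^sup>2 * c2 * Cg * a0 * E1) + K' / 2 * s2\<^sup>2 * c1 * Cf * b0 * E2 - K'\<^sup>2 * c2 * b0 * E2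
       - K' / 2 * c1 * c2\<^sup>2 * Cf * b0 * E2) = 0"
proof -
  define X where "X = K / 2 * Cg * a0 * E1"
  define Y where "Y = K' / 2 * Cf * b0 * E2"
  have "(c1 * (a2 - 2 * K * a1 + K\<^sup>2 * a0) * E1 + c2 * (b2 - 2 * K' * b1 + K'\<^sup>2 * b0) * E2)
    + (- (K\<^sup>2 * c1 * a0 * E1) + K / 2 * Cg * a0 * E1 * c2 * (s1\<^sup>2 - c1\<^sup>2) - K' * c1 * s2\<^sup>2 * Cf * b0 * E2)
    + (- (K * s1\<^sup>2 * c2 * Cg * a0 * E1) + K' / 2 * s2\<^sup>2 * c1 * Cf * b0 * E2 - K'\<^sup>2 * c2 * b0 * E2
       - K' / 2 * c1 * c2\<^sup>2 * Cf * b0 * E2)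
    = c1 * ((a2 - 2 * K * a1) * E1 - Y) + c2 * ((b2 - 2 * K' * b1) * E2 - X)
      + X * c2 * (1 - (s1\<^sup>2 + c1\<^sup>2)) + Y * c1 * (1 - (s2\<^sup>2 + c2\<^sup>2))"
    unfolding X_def Y_def by (simp add: field_simps power2_eq_square)
  also have "\<dots> = 0"
    using assms unfolding X_def Y_def by simp
  finally show ?thesis .
qed

definition mat_unit :: "2 \<Rightarrow> 2 \<Rightarrow> real^2^2" where
  "mat_unit i j = axis i (axis j 1)"

lemma norm_mat_unit [simp]: "norm (mat_unit i j) = 1"
  by (simp add: mat_unit_def norm_eq_sqrt_inner inner_axis_axis)

lemma mat_unit_nth [simp]: "mat_unit i j $ r $ c = (if r = i \<and> c = j then 1 else 0)"
  by (simp add: mat_unit_def axis_def)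

lemma norm_scaleR_add_le:
  fixes M N :: "'a::real_normed_vector"
  assumes "\<bar>\<alpha>\<bar> \<le> c" "\<bar>\<beta>\<bar> \<le> c"
  shows "norm (\<alpha> *\<^sub>R M + \<beta> *\<^sub>R N) \<le> c * (norm M + norm N)"
proof -
  have "norm (\<alpha> *\<^sub>R M + \<beta> *\<^sub>R N) \<le> \<bar>\<alpha>\<bar> * norm M + \<bar>\<beta>\<bar> * norm N"
    using norm_triangle_ineq[of "\<alpha> *\<^sub>R M" "\<beta> *\<^sub>R N"] by simp
  also have "\<dots> \<le> c * norm M + c * norm N"
    using assms by (intro add_mono mult_right_mono) auto
  finally show ?thesis
    by (simp add: distrib_left)
qed

definition transition_bound :: "real \<Rightarrow> real \<Rightarrow> real" where
  "transition_bound C0 B = 36 * (1 + B) * (1 + C0\<^sup>2) ^ 3 * exp (2 * C0)"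

locale transition =
  fixes C0 B :: real and k k' :: nat and w :: real
  assumes C0_ge_1: "1 \<le> C0"
    and abs_theta_deriv_le: "\<And>n t. n \<le> 3 \<Longrightarrow> \<bar>theta_deriv n t\<bar> \<le> B"
    and k_pos: "0 < k" and w_pos: "0 < w" and k_less: "k < k'"
    and gap_le: "real k' - real k \<le> C0 / w" and inv_w_le: "1 / w \<le> C0 * real k"
begin

lemma B_ge_1: "1 \<le> B"
  using abs_theta_deriv_le[of 0 0] by (simp add: theta_deriv_def)

definition freq :: real where
  "freq = (1 + C0\<^sup>2) * real k"

lemma freq_bounds:
  "1 / w \<le> freq" "real k \<le> freq" "real k' \<le> freq" "real k' - real k \<le> freq"
  "freq \<le> (1 + C0\<^sup>2) * real k'"
proof -
  have "C0 * 1 \<le> C0 * C0"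
    using C0_ge_1 by (intro mult_left_mono) auto
  then have C0_le: "C0 \<le> 1 + C0\<^sup>2"
    by (simp add: power2_eq_square)
  have "real k' - real k \<le> C0 * (C0 * real k)"
    using gap_le inv_w_le C0_ge_1 order.trans[OF _ mult_left_mono[of "1 / w" "C0 * real k" C0]] by simp
  then show "real k' \<le> freq" "real k' - real k \<le> freq"
    by (simp_all add: freq_def algebra_simps power2_eq_square)
  show "1 / w \<le> freq"
    using inv_w_le C0_le by (simp add: freq_def order.trans[OF _ mult_right_mono])
  show "real k \<le> freq" "freq \<le> (1 + C0\<^sup>2) * real k'"
    using k_less by (simp_all add: freq_def algebra_simps add_mono mult_right_mono)
qed

lemma freq_pos: "0 < freq"
  using k_pos by (simp add: freq_def add_pos_nonneg)

text \<open>The cut-offs of the construction: \<open>a 0 t = \<alpha> (t - w)\<close> and \<open>b 0 t = 1 - \<alpha> t\<close>, so that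
  \<open>u = a 0 * f + b 0 * g\<close> on all of \<open>\<real>\<close>; \<open>a n\<close> and \<open>b n\<close> are their \<open>n\<close>-th derivatives.\<close>

definition a :: "nat \<Rightarrow> real \<Rightarrow> real" where
  "a n t = theta_deriv n ((t - w) / w) / w ^ n"

definition b :: "nat \<Rightarrow> real \<Rightarrow> real" where
  "b n t = (if n = 0 then 1 else 0) - theta_deriv n (t / w) / w ^ n"

lemma derivs_upto_a: "derivs_upto 3 a"
  using derivs_upto_rescale[OF derivs_upto_theta_deriv, of w w] w_pos
  by (simp add: a_def[abs_def])

lemma derivs_upto_b: "derivs_upto 3 b"
  using derivs_upto_const_minus[OF derivs_upto_rescale[OF derivs_upto_theta_deriv, of w 0], of 1] w_pos
  by (simp add: b_def[abs_def])

lemma a_0_eq_1: "t \<le> w \<Longrightarrow> a 0 t = 1"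
  using w_pos divide_nonpos_pos[of "t - w" w] by (simp add: a_def theta_deriv_def)

lemma b_0_eq_1: "w \<le> t \<Longrightarrow> b 0 t = 1"
  using w_pos by (simp add: b_def theta_deriv_def le_divide_eq_1_pos not_le order.strict_trans2)

lemma a_Suc_eq_0: "t \<le> w \<or> 2 * w \<le> t \<Longrightarrow> a (Suc n) t = 0"
  using w_pos by (auto simp: a_def theta_deriv_eq_0 divide_nonpos_pos field_simps)

lemma b_Suc_eq_0: "t \<le> 0 \<or> w \<le> t \<Longrightarrow> b (Suc n) t = 0"
  using w_pos by (auto simp: b_def theta_deriv_eq_0 divide_nonpos_pos)

lemma abs_a_le: "n \<le> 3 \<Longrightarrow> \<bar>a n t\<bar> \<le> B * freq ^ n"
  and abs_a_Suc_le: "n \<le> 2 \<Longrightarrow> \<bar>a (Suc n) t\<bar> \<le> B / w * freq ^ n"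
  and abs_b_le: "n \<le> 3 \<Longrightarrow> \<bar>b n t\<bar> \<le> (1 + B) * freq ^ n"
  and abs_b_Suc_le: "n \<le> 2 \<Longrightarrow> \<bar>b (Suc n) t\<bar> \<le> B / w * freq ^ n"
proof -
  have inv_w_pow: "(1 / w) ^ n \<le> freq ^ n" for n
    using w_pos freq_bounds(1) by (intro power_mono) auto
  have theta: "\<bar>theta_deriv n s / w ^ n\<bar> \<le> B * freq ^ n" if "n \<le> 3" for n s
  proof -
    have "\<bar>theta_deriv n s\<bar> * (1 / w) ^ n \<le> B * freq ^ n"
      using abs_theta_deriv_le[OF that, of s] inv_w_pow[of n] B_ge_1 w_pos by (intro mult_mono) auto
    then show ?thesis
      using w_pos by (simp add: abs_divide power_one_over)
  qed
  have theta_Suc: "\<bar>theta_deriv (Suc n) s / w ^ Suc n\<bar> \<le> B / w * freq ^ n" if "n \<le> 2" for n s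
  proof -
    have "\<bar>theta_deriv (Suc n) s\<bar> / w * (1 / w) ^ n \<le> B / w * freq ^ n"
      using abs_theta_deriv_le[of "Suc n" s] that inv_w_pow[of n] B_ge_1 w_pos
      by (intro mult_mono divide_right_mono) auto
    then show ?thesis
      using w_pos by (simp add: abs_divide power_one_over)
  qed
  show "n \<le> 3 \<Longrightarrow> \<bar>a n t\<bar> \<le> B * freq ^ n" "n \<le> 2 \<Longrightarrow> \<bar>a (Suc n) t\<bar> \<le> B / w * freq ^ n"
    "n \<le> 2 \<Longrightarrow> \<bar>b (Suc n) t\<bar> \<le> B / w * freq ^ n"
    using theta theta_Suc by (simp_all add: a_def b_def)
  show "n \<le> 3 \<Longrightarrow> \<bar>b n t\<bar> \<le> (1 + B) * freq ^ n"
    using theta[of n "t / w"] freq_bounds(2) k_pos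
    by (cases n) (auto simp: b_def intro: order.trans[OF _ mult_right_mono])
qed

abbreviation u :: "real \<Rightarrow> real \<Rightarrow> real \<Rightarrow> real" where
  "u \<equiv> ufun k k' w"

definition modes ::
    "((nat \<Rightarrow> real \<Rightarrow> real) \<times> (nat \<Rightarrow> real \<Rightarrow> real) \<times> (nat \<Rightarrow> real \<Rightarrow> real)) list" where
  "modes = [(cos_derivs k, cos_derivs 0, damped_derivs k a), (cos_derivs 0, cos_derivs k', damped_derivs k' b)]"

lemma u_eq_sep_derivs: "u = sep_derivs modes []"
proof (intro ext)
  fix x y t
  show "u x y t = sep_derivs modes [] x y t"
  proof (cases "t \<le> w")
    case True
    then show ?thesis
      by (simp add: ufun_def sep_derivs_def modes_def a_0_eq_1 ffun_def gfun_def b_def theta_deriv_0)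
  next
    case False
    then show ?thesis
      by (simp add: ufun_def sep_derivs_def modes_def b_0_eq_1 ffun_def gfun_def a_def theta_deriv_0)
  qed
qed

lemma pderivs_u: "set is \<subseteq> {0, 1, 2} \<Longrightarrow> length is \<le> 3 \<Longrightarrow> pderivs is u = sep_derivs modes is"
  unfolding u_eq_sep_derivs
  by (rule pderivs_sep_derivs)
     (auto simp: modes_def derivs_upto_cos_derivs derivs_upto_damped derivs_upto_a derivs_upto_b)

lemma abs_damped_cutoff_le:
  assumes "F = a \<or> F = b" "0 \<le> \<kappa>" "\<kappa> \<le> freq" "0 \<le> t" "n \<le> 2"
  shows "\<bar>damped_derivs \<kappa> F n t\<bar> \<le> 4 * (1 + B) * (1 + C0\<^sup>2)\<^sup>2 * real k' ^ n"
proof -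
  have "\<bar>F j t\<bar> \<le> (1 + B) * freq ^ j" if "j \<le> n" for j
    using assms(1,5) that abs_a_le[of j t] abs_b_le[of j t] freq_bounds(2) k_pos
    by (auto intro: order.trans[OF _ mult_right_mono])
  then have "\<bar>damped_derivs \<kappa> F n t\<bar> \<le> 2 ^ n * (1 + B) * freq ^ n * exp (- \<kappa> * t)"
    using assms(2,3) by (intro abs_damped_derivs_le) auto
  also have "\<dots> \<le> 2 ^ n * (1 + B) * freq ^ n"
    using assms(2,4) B_ge_1 freq_bounds(2) k_pos by (intro mult_left_le) (auto simp: mult_nonneg_nonpos)
  also have "\<dots> \<le> 4 * (1 + B) * (1 + C0\<^sup>2)\<^sup>2 * real k' ^ n"
  proof -
    have "freq ^ n \<le> ((1 + C0\<^sup>2) * real k') ^ n"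
      using freq_bounds(2,5) k_pos by (intro power_mono) auto
    also have "\<dots> \<le> (1 + C0\<^sup>2)\<^sup>2 * real k' ^ n"
      using assms(5) by (simp add: power_mult_distrib power_increasing mult_right_mono)
    finally have "2 ^ n * freq ^ n \<le> 4 * ((1 + C0\<^sup>2)\<^sup>2 * real k' ^ n)"
      using assms(5) freq_pos by (intro mult_mono) (auto simp: power_increasing[of n 2 "2::real", simplified])
    then have "(1 + B) * (2 ^ n * freq ^ n) \<le> (1 + B) * (4 * ((1 + C0\<^sup>2)\<^sup>2 * real k' ^ n))"
      using B_ge_1 by (intro mult_left_mono) auto
    then show ?thesis
      by (simp add: algebra_simps)
  qed
  finally show ?thesis .
qed

lemma abs_pderivs_u_le:
  assumes "set is \<subseteq> {0, 1, 2}" "length is \<le> 2" "0 \<le> t"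
  shows "\<bar>pderivs is u x y t\<bar> \<le> 8 * (1 + B) * (1 + C0\<^sup>2)\<^sup>2 * real k' ^ length is"
proof -
  define K where "K = 4 * (1 + B) * (1 + C0\<^sup>2)\<^sup>2"
  define i j l where "i = count_list is 0" and "j = count_list is 1" and "l = count_list is 2"
  have len: "i + j + l = length is" and "l \<le> 2"
    using count_list_directions[OF assms(1)] count_le_length[of "is" 2] assms(2)
    by (auto simp: i_def j_def l_def)
  have K: "0 \<le> K"
    using B_ge_1 by (simp add: K_def)
  have "pderivs is u x y t = cos_derivs k i x * cos_derivs 0 j y * damped_derivs k a l t
        + cos_derivs 0 i x * cos_derivs k' j y * damped_derivs k' b l t"
    using assms by (simp add: pderivs_u sep_derivs_def modes_def i_def j_def l_def)
  then have "\<bar>pderivs is u x y t\<bar>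
      \<le> \<bar>cos_derivs k i x\<bar> * \<bar>cos_derivs 0 j y\<bar> * \<bar>damped_derivs k a l t\<bar>
        + \<bar>cos_derivs 0 i x\<bar> * \<bar>cos_derivs k' j y\<bar> * \<bar>damped_derivs k' b l t\<bar>"
    by (metis abs_mult abs_triangle_ineq)
  also have "\<dots> \<le> real k ^ i * 0 ^ j * (K * real k' ^ l) + 0 ^ i * real k' ^ j * (K * real k' ^ l)"
    using abs_damped_cutoff_le[of a k t l] abs_damped_cutoff_le[of b k' t l] \<open>l \<le> 2\<close> assms(3)
      freq_bounds(2,3) abs_cos_derivs_le[of "real k" i x] abs_cos_derivs_le[of 0 j y]
      abs_cos_derivs_le[of 0 i x] abs_cos_derivs_le[of "real k'" j y]
    by (intro add_mono mult_mono) (auto simp: K_def)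
  also have "\<dots> = K * (real k ^ i * 0 ^ j * real k' ^ l + real k' ^ j * 0 ^ i * real k' ^ l)"
    by (simp add: algebra_simps)
  also have "\<dots> \<le> K * (real k' ^ length is + real k' ^ length is)"
    using power_zero_factor_le[of "real k" "real k'" i j l] power_zero_factor_le[of "real k'" "real k'" j i l]
      k_less K len
    by (intro mult_left_mono add_mono) (auto simp: add.commute)
  finally show ?thesis
    by (simp add: K_def algebra_simps)
qed

lemma u_origin: "u 0 0 0 = 1"
  using w_pos by (simp add: ufun_def ffun_def gfun_def theta_def)

lemma Sup_abs_u_ge_1: "1 \<le> Sup {\<bar>u x' y' t'\<bar> | x' y' t'. 0 \<le> t' \<and> t' \<le> 2 * w}"
proof (rule cSup_upper)
  show "1 \<in> {\<bar>u x' y' t'\<bar> | x' y' t'. 0 \<le> t' \<and> t' \<le> 2 * w}"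
    using w_pos u_origin by (auto intro!: exI[of _ 0])
  show "bdd_above {\<bar>u x' y' t'\<bar> | x' y' t'. 0 \<le> t' \<and> t' \<le> 2 * w}"
    using abs_pderivs_u_le[of "[]"] by (auto intro!: bdd_aboveI simp: pderivs_def)
qed

lemma isCont_a: "isCont (a n) t"
  unfolding a_def[abs_def] using w_pos
  by (intro continuous_intros isCont_o2[OF _ isCont_theta_deriv]) auto

lemma isCont_b: "isCont (b n) t"
  unfolding b_def[abs_def] using w_pos
  by (intro continuous_intros isCont_o2[OF _ isCont_theta_deriv]) auto

text \<open>The coefficients of the perturbation \<open>A - 1\<close>: \<open>cg\<close> absorbs the error that the cut-off
  \<open>b\<close> creates in \<open>\<Delta>(b g) + (b g)\<^sub>t\<^sub>t\<close>, \<open>cf\<close> the one that \<open>a\<close> creates for \<open>f\<close>.\<close>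

definition cg :: "real \<Rightarrow> real" where
  "cg t = 2 * (b 2 t - 2 * real k' * b 1 t) * exp (- (real k' - real k) * t) / real k"

definition cg' :: "real \<Rightarrow> real" where
  "cg' t = 2 * ((b 3 t - 2 * real k' * b 2 t) - (real k' - real k) * (b 2 t - 2 * real k' * b 1 t))
     * exp (- (real k' - real k) * t) / real k"

definition cf :: "real \<Rightarrow> real" where
  "cf t = 2 * (a 2 t - 2 * real k * a 1 t) * exp ((real k' - real k) * t) / real k'"

definition cf' :: "real \<Rightarrow> real" where
  "cf' t = 2 * ((a 3 t - 2 * real k * a 2 t) + (real k' - real k) * (a 2 t - 2 * real k * a 1 t))
     * exp ((real k' - real k) * t) / real k'"

lemma cg_has_real_derivative: "(cg has_real_derivative cg' t) (at t)"
proof -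
  have "(b 1 has_real_derivative b 2 t) (at t)" "(b 2 has_real_derivative b 3 t) (at t)"
    using derivs_uptoD[OF derivs_upto_b, of 1 t] derivs_uptoD[OF derivs_upto_b, of 2 t]
    by (simp_all add: eval_nat_numeral)
  then show ?thesis
    unfolding cg_def[abs_def] cg'_def
    using k_pos by (auto intro!: derivative_eq_intros simp: field_simps)
qed

lemma cf_has_real_derivative: "(cf has_real_derivative cf' t) (at t)"
proof -
  have "(a 1 has_real_derivative a 2 t) (at t)" "(a 2 has_real_derivative a 3 t) (at t)"
    using derivs_uptoD[OF derivs_upto_a, of 1 t] derivs_uptoD[OF derivs_upto_a, of 2 t]
    by (simp_all add: eval_nat_numeral)
  then show ?thesis
    unfolding cf_def[abs_def] cf'_def
    using k_less by (auto intro!: derivative_eq_intros simp: field_simps)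
qed

lemma isCont_cg': "isCont cg' t" and isCont_cf': "isCont cf' t"
  unfolding cg'_def[abs_def] cf'_def[abs_def]
  using k_pos k_less by (auto intro!: continuous_intros isCont_a isCont_b)

lemma cg_eq_0: "t \<le> 0 \<or> w \<le> t \<Longrightarrow> cg t = 0 \<and> cg' t = 0"
  using b_Suc_eq_0[of t 0] b_Suc_eq_0[of t 1] b_Suc_eq_0[of t 2] k_pos
  by (simp add: cg_def cg'_def eval_nat_numeral)

lemma cf_eq_0: "t \<le> w \<or> 2 * w \<le> t \<Longrightarrow> cf t = 0 \<and> cf' t = 0"
  using a_Suc_eq_0[of t 0] a_Suc_eq_0[of t 1] a_Suc_eq_0[of t 2] k_less
  by (simp add: cf_def cf'_def eval_nat_numeral)

lemma cg_absorbs_residual: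
  "real k / 2 * cg t * a 0 t * exp (- real k * t) = (b 2 t - 2 * real k' * b 1 t) * exp (- real k' * t)"
proof (cases "t \<le> w")
  case True
  have "exp (- (real k' - real k) * t) * exp (- real k * t) = exp (- real k' * t)"
    by (simp add: exp_add[symmetric] algebra_simps)
  then show ?thesis
    using True a_0_eq_1[OF True] k_pos by (simp add: cg_def field_simps)
next
  case False
  then show ?thesis
    using cg_eq_0[of t] b_Suc_eq_0[of t 0] b_Suc_eq_0[of t 1] by (simp add: eval_nat_numeral)
qed

lemma cf_absorbs_residual:
  "real k' / 2 * cf t * b 0 t * exp (- real k' * t) = (a 2 t - 2 * real k * a 1 t) * exp (- real k * t)"
proof (cases "w \<le> t")
  case True
  have "exp ((real k' - real k) * t) * exp (- real k' * t) = exp (- real k * t)"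
    by (simp add: exp_add[symmetric] algebra_simps)
  then show ?thesis
    using True b_0_eq_1[OF True] k_less by (simp add: cf_def field_simps)
next
  case False
  then show ?thesis
    using cf_eq_0[of t] a_Suc_eq_0[of t 0] a_Suc_eq_0[of t 1] by (simp add: eval_nat_numeral)
qed

definition coeff_bound :: real where
  "coeff_bound = 12 * B * (1 + C0\<^sup>2)\<^sup>2 * exp (2 * C0)"

lemma abs_scaled_le:
  assumes "\<bar>Z\<bar> \<le> N" "0 \<le> E" "E \<le> exp (2 * C0)" "real k \<le> \<kappa>"
  shows "\<bar>2 * Z * E / \<kappa>\<bar> \<le> 2 * N * exp (2 * C0) / real k"
proof -
  have "2 * \<bar>Z\<bar> * E \<le> 2 * N * exp (2 * C0)"
    using assms by (intro mult_mono) auto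
  then have "2 * \<bar>Z\<bar> * E / \<kappa> \<le> 2 * N * exp (2 * C0) / real k"
    using assms k_pos by (intro frac_le) auto
  then show ?thesis
    using assms k_pos by (simp add: abs_mult)
qed

lemma abs_coeff_le:
  assumes "\<bar>X\<bar> \<le> 3 * (B / w) * freq" "0 \<le> E" "E \<le> exp (2 * C0)" "real k \<le> \<kappa>"
  shows "\<bar>2 * X * E / \<kappa>\<bar> \<le> coeff_bound / w"
proof -
  let ?L = "1 + C0\<^sup>2"
  have "\<bar>2 * X * E / \<kappa>\<bar> \<le> 2 * (3 * (B / w) * freq) * exp (2 * C0) / real k"
    using assms by (rule abs_scaled_le)
  also have "\<dots> = 6 * B * ?L * exp (2 * C0) / w"
    using k_pos w_pos by (simp add: freq_def field_simps)
  also have "\<dots> \<le> coeff_bound / w"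
  proof -
    have "?L * 1 \<le> ?L\<^sup>2"
      unfolding power2_eq_square by (intro mult_left_mono) auto
    then show ?thesis
      unfolding coeff_bound_def using w_pos B_ge_1
      by (intro divide_right_mono mult_right_mono mult_mono) auto
  qed
  finally show ?thesis .
qed

lemma abs_coeff_deriv_le:
  assumes X: "\<bar>X\<bar> \<le> 3 * (B / w) * freq" and Y: "\<bar>Y\<bar> \<le> 3 * (B / w) * freq * freq"
    and \<delta>: "\<bar>\<delta>\<bar> \<le> freq" and "0 \<le> E" "E \<le> exp (2 * C0)" "real k \<le> \<kappa>"
  shows "\<bar>2 * (Y + \<delta> * X) * E / \<kappa>\<bar> \<le> coeff_bound * real k / w"
proof -
  have "\<bar>Y + \<delta> * X\<bar> \<le> \<bar>Y\<bar> + \<bar>\<delta>\<bar> * \<bar>X\<bar>"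
    by (metis abs_mult abs_triangle_ineq)
  also have "\<dots> \<le> 3 * (B / w) * freq * freq + freq * (3 * (B / w) * freq)"
    using X Y \<delta> freq_pos by (intro add_mono mult_mono) auto
  finally have "\<bar>2 * (Y + \<delta> * X) * E / \<kappa>\<bar>
      \<le> 2 * (3 * (B / w) * freq * freq + freq * (3 * (B / w) * freq)) * exp (2 * C0) / real k"
    using assms(4-) by (rule abs_scaled_le)
  also have "\<dots> = coeff_bound * real k / w"
    using k_pos w_pos by (simp add: coeff_bound_def freq_def field_simps power2_eq_square)
  finally show ?thesis .
qed

lemma abs_cg_le: "\<bar>cg t\<bar> \<le> coeff_bound / w" "\<bar>cg' t\<bar> \<le> coeff_bound * real k / w"
proof -
  have bound: "0 \<le> coeff_bound"
    using B_ge_1 by (simp add: coeff_bound_def)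
  have "\<bar>cg t\<bar> \<le> coeff_bound / w \<and> \<bar>cg' t\<bar> \<le> coeff_bound * real k / w"
  proof (cases "t \<le> 0 \<or> w \<le> t")
    case True
    then show ?thesis
      using cg_eq_0[of t] bound w_pos by simp
  next
    case False
    have X: "\<bar>b 2 t - 2 * real k' * b 1 t\<bar> \<le> 3 * (B / w) * freq"
      using abs_b_Suc_le[of 0 t] abs_b_Suc_le[of 1 t] freq_bounds(3)
      by (intro abs_diff_double_le) (auto simp: numeral_2_eq_2)
    have Y: "\<bar>b 3 t - 2 * real k' * b 2 t\<bar> \<le> 3 * (B / w) * freq * freq"
      using abs_diff_double_le[of "b 2 t" "B / w * freq" "b 3 t" freq "real k'"]
        abs_b_Suc_le[of 1 t] abs_b_Suc_le[of 2 t] freq_bounds(3)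
      by (simp add: eval_nat_numeral mult_ac)
    have "- (real k' - real k) * t \<le> 0"
      using False k_less by (intro mult_nonpos_nonneg) auto
    then have E: "0 \<le> exp (- (real k' - real k) * t)" "exp (- (real k' - real k) * t) \<le> exp (2 * C0)"
      using C0_ge_1 by auto
    have \<delta>: "\<bar>real k - real k'\<bar> \<le> freq"
      using freq_bounds(4) k_less by simp
    have "cg' t = 2 * ((b 3 t - 2 * real k' * b 2 t) + (real k - real k') * (b 2 t - 2 * real k' * b 1 t))
        * exp (- (real k' - real k) * t) / real k"
      by (simp add: cg'_def algebra_simps)
    then show ?thesis
      using abs_coeff_le[OF X E order.refl] abs_coeff_deriv_le[OF X Y \<delta> E order.refl] by (simp add: cg_def)
  qed
  then show "\<bar>cg t\<bar> \<le> coeff_bound / w" "\<bar>cg' t\<bar> \<le> coeff_bound * real k / w"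
    by auto
qed

lemma abs_cf_le: "\<bar>cf t\<bar> \<le> coeff_bound / w" "\<bar>cf' t\<bar> \<le> coeff_bound * real k / w"
proof -
  have bound: "0 \<le> coeff_bound"
    using B_ge_1 by (simp add: coeff_bound_def)
  have "\<bar>cf t\<bar> \<le> coeff_bound / w \<and> \<bar>cf' t\<bar> \<le> coeff_bound * real k / w"
  proof (cases "t \<le> w \<or> 2 * w \<le> t")
    case True
    then show ?thesis
      using cf_eq_0[of t] bound w_pos by simp
  next
    case False
    have X: "\<bar>a 2 t - 2 * real k * a 1 t\<bar> \<le> 3 * (B / w) * freq"
      using abs_a_Suc_le[of 0 t] abs_a_Suc_le[of 1 t] freq_bounds(2)
      by (intro abs_diff_double_le) (auto simp: numeral_2_eq_2)
    have Y: "\<bar>a 3 t - 2 * real k * a 2 t\<bar> \<le> 3 * (B / w) * freq * freq"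
      using abs_diff_double_le[of "a 2 t" "B / w * freq" "a 3 t" freq "real k"]
        abs_a_Suc_le[of 1 t] abs_a_Suc_le[of 2 t] freq_bounds(2)
      by (simp add: eval_nat_numeral mult_ac)
    have "(real k' - real k) * t \<le> C0 / w * (2 * w)"
      using False k_less gap_le by (intro mult_mono) auto
    then have E: "0 \<le> exp ((real k' - real k) * t)" "exp ((real k' - real k) * t) \<le> exp (2 * C0)"
      using w_pos by auto
    have \<delta>: "\<bar>real k' - real k\<bar> \<le> freq"
      using freq_bounds(4) k_less by simp
    have \<kappa>: "real k \<le> real k'"
      using k_less by simp
    show ?thesis
      using abs_coeff_le[OF X E \<kappa>] abs_coeff_deriv_le[OF X Y \<delta> E \<kappa>] by (simp add: cf_def cf'_def)
  qed
  then show "\<bar>cf t\<bar> \<le> coeff_bound / w" "\<bar>cf' t\<bar> \<le> coeff_bound * real k / w"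
    by auto
qed

definition A_cos :: "real \<Rightarrow> real^2^2" where
  "A_cos t = (cg t / (2 * real k)) *\<^sub>R mat_unit 1 1 + (cf t / (2 * real k')) *\<^sub>R mat_unit 2 2"

definition A_sin :: "real \<Rightarrow> real^2^2" where
  "A_sin t = (cf t / real k) *\<^sub>R mat_unit 1 2 + (cg t / real k') *\<^sub>R mat_unit 2 1"

definition A_cos' :: "real \<Rightarrow> real^2^2" where
  "A_cos' t = (cg' t / (2 * real k)) *\<^sub>R mat_unit 1 1 + (cf' t / (2 * real k')) *\<^sub>R mat_unit 2 2"

definition A_sin' :: "real \<Rightarrow> real^2^2" where
  "A_sin' t = (cf' t / real k) *\<^sub>R mat_unit 1 2 + (cg' t / real k') *\<^sub>R mat_unit 2 1"

definition Amat :: "real \<Rightarrow> real \<Rightarrow> real \<Rightarrow> real^2^2" where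
  "Amat x y t = mat 1 + (cos (real k * x) * cos (real k' * y)) *\<^sub>R A_cos t
     + (sin (real k * x) * sin (real k' * y)) *\<^sub>R A_sin t"

definition Amat_dx :: "real \<Rightarrow> real \<Rightarrow> real \<Rightarrow> real^2^2" where
  "Amat_dx x y t = (- real k * sin (real k * x) * cos (real k' * y)) *\<^sub>R A_cos t
     + (real k * cos (real k * x) * sin (real k' * y)) *\<^sub>R A_sin t"

definition Amat_dy :: "real \<Rightarrow> real \<Rightarrow> real \<Rightarrow> real^2^2" where
  "Amat_dy x y t = (- real k' * cos (real k * x) * sin (real k' * y)) *\<^sub>R A_cos t
     + (real k' * sin (real k * x) * cos (real k' * y)) *\<^sub>R A_sin t"

definition Amat_dt :: "real \<Rightarrow> real \<Rightarrow> real \<Rightarrow> real^2^2" where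
  "Amat_dt x y t = (cos (real k * x) * cos (real k' * y)) *\<^sub>R A_cos' t
     + (sin (real k * x) * sin (real k' * y)) *\<^sub>R A_sin' t"

lemma A_cos_has_vector_derivative: "(A_cos has_vector_derivative A_cos' t) (at t)"
  and A_sin_has_vector_derivative: "(A_sin has_vector_derivative A_sin' t) (at t)"
  unfolding A_cos_def[abs_def] A_sin_def[abs_def] A_cos'_def A_sin'_def
  using k_pos k_less by (auto intro!: derivative_eq_intros cg_has_real_derivative cf_has_real_derivative)

lemma isCont_A_cos: "isCont A_cos t" and isCont_A_sin: "isCont A_sin t"
  and isCont_A_cos': "isCont A_cos' t" and isCont_A_sin': "isCont A_sin' t"
  unfolding A_cos_def[abs_def] A_sin_def[abs_def] A_cos'_def[abs_def] A_sin'_def[abs_def]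
  using k_pos k_less
  by (auto intro!: continuous_intros isCont_cg' isCont_cf' DERIV_isCont[OF cg_has_real_derivative]
      DERIV_isCont[OF cf_has_real_derivative])

lemma Amat_has_derivative:
  "((\<lambda>(x, y, t). Amat x y t) has_derivative
     (\<lambda>h. fst h *\<^sub>R Amat_dx x y t + fst (snd h) *\<^sub>R Amat_dy x y t + snd (snd h) *\<^sub>R Amat_dt x y t))
   (at (x, y, t))"
proof -
  have cos: "((\<lambda>x. cos (c * x)) has_real_derivative - c * sin (c * x)) (at x)"
    and sin: "((\<lambda>x. sin (c * x)) has_real_derivative c * cos (c * x)) (at x)" for c x :: real
    by (auto intro!: derivative_eq_intros)
  have "(\<lambda>(x, y, t). Amat x y t) = (\<lambda>p. mat 1
      + (\<lambda>(x, y, t). (cos (real k * x) * cos (real k' * y)) *\<^sub>R A_cos t) p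
      + (\<lambda>(x, y, t). (sin (real k * x) * sin (real k' * y)) *\<^sub>R A_sin t) p)"
    by (auto simp: Amat_def fun_eq_iff)
  moreover have "((\<lambda>p. mat 1
      + (\<lambda>(x, y, t). (cos (real k * x) * cos (real k' * y)) *\<^sub>R A_cos t) p
      + (\<lambda>(x, y, t). (sin (real k * x) * sin (real k' * y)) *\<^sub>R A_sin t) p) has_derivative
     (\<lambda>h. fst h *\<^sub>R Amat_dx x y t + fst (snd h) *\<^sub>R Amat_dy x y t + snd (snd h) *\<^sub>R Amat_dt x y t))
   (at (x, y, t))"
    by (rule has_derivative_eq_rhs[OF has_derivative_add[OF has_derivative_add[OF has_derivative_const
          has_derivative_separable[OF cos cos A_cos_has_vector_derivative]]
          has_derivative_separable[OF sin sin A_sin_has_vector_derivative]]])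
       (auto simp: fun_eq_iff Amat_dx_def Amat_dy_def Amat_dt_def algebra_simps)
  ultimately show ?thesis
    by simp
qed

lemma pd_Amat: "pd 0 Amat x y t = Amat_dx x y t" "pd 1 Amat x y t = Amat_dy x y t"
  "pd 2 Amat x y t = Amat_dt x y t"
  by (rule pd_eq_of_has_derivative[OF Amat_has_derivative])+

lemma C1_Amat: "C1_fun3 Amat"
proof (rule C1_fun3I[OF Amat_has_derivative])
  have "isCont (\<lambda>p. A_cos (snd (snd p))) p" "isCont (\<lambda>p. A_sin (snd (snd p))) p"
    "isCont (\<lambda>p. A_cos' (snd (snd p))) p" "isCont (\<lambda>p. A_sin' (snd (snd p))) p"
    for p :: "real \<times> real \<times> real"
    by (rule isCont_o2[OF _ isCont_A_cos] isCont_o2[OF _ isCont_A_sin] isCont_o2[OF _ isCont_A_cos']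
        isCont_o2[OF _ isCont_A_sin'], intro continuous_intros)+
  then show "continuous_on UNIV (\<lambda>p. Amat_dx (fst p) (fst (snd p)) (snd (snd p)))"
    "continuous_on UNIV (\<lambda>p. Amat_dy (fst p) (fst (snd p)) (snd (snd p)))"
    "continuous_on UNIV (\<lambda>p. Amat_dt (fst p) (fst (snd p)) (snd (snd p)))"
    unfolding Amat_dx_def Amat_dy_def Amat_dt_def
    by (auto intro!: continuous_at_imp_continuous_on continuous_intros)
qed

lemma periodic_Amat: "periodic_xy Amat"
proof -
  have "cos (real n * (z + 2 * pi)) = cos (real n * z)" "sin (real n * (z + 2 * pi)) = sin (real n * z)"
    for n :: nat and z
    using cos.plus_of_nat[of "real n * z" n] sin.plus_of_nat[of "real n * z" n]
    by (simp_all add: algebra_simps)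
  then show ?thesis
    by (simp add: periodic_xy_def Amat_def)
qed

lemma Amat_eq_1: "t \<le> 0 \<or> 2 * w \<le> t \<Longrightarrow> Amat x y t = mat 1"
  using cg_eq_0[of t] cf_eq_0[of t] w_pos by (auto simp: Amat_def A_cos_def A_sin_def)

lemma Amat_entries:
  "Amat x y t $ 1 $ 1 = 1 + cos (real k * x) * cos (real k' * y) * (cg t / (2 * real k))"
  "Amat x y t $ 1 $ 2 = sin (real k * x) * sin (real k' * y) * (cf t / real k)"
  "Amat x y t $ 2 $ 1 = sin (real k * x) * sin (real k' * y) * (cg t / real k')"
  "Amat x y t $ 2 $ 2 = 1 + cos (real k * x) * cos (real k' * y) * (cf t / (2 * real k'))"
  by (simp_all add: Amat_def A_cos_def A_sin_def mat_def)

lemma norm_A_cos_le: "norm (A_cos t) \<le> coeff_bound / (w * real k)"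
  and norm_A_sin_le: "norm (A_sin t) \<le> 2 * coeff_bound / (w * real k)"
  and norm_A_cos'_le: "norm (A_cos' t) \<le> coeff_bound / w"
  and norm_A_sin'_le: "norm (A_sin' t) \<le> 2 * coeff_bound / w"
proof -
  have k: "0 < real k" "real k \<le> real k'"
    using k_pos k_less by auto
  have div_k': "\<bar>c\<bar> / real k' \<le> C / real k" if "\<bar>c\<bar> \<le> C" for c C
    using that k by (intro frac_le) auto
  have norm2: "norm (\<alpha> *\<^sub>R mat_unit i j + \<beta> *\<^sub>R mat_unit r c) \<le> \<bar>\<alpha>\<bar> + \<bar>\<beta>\<bar>" for \<alpha> \<beta> i j r c
    using norm_triangle_ineq[of "\<alpha> *\<^sub>R mat_unit i j" "\<beta> *\<^sub>R mat_unit r c"] by simp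
  have "norm (A_cos t) \<le> \<bar>cg t\<bar> / (2 * real k) + \<bar>cf t\<bar> / (2 * real k')"
    using norm2[of "cg t / (2 * real k)" 1 1 "cf t / (2 * real k')" 2 2] by (simp add: A_cos_def abs_divide)
  also have "\<dots> \<le> coeff_bound / w / (2 * real k) + coeff_bound / w / (2 * real k)"
    using div_k'[OF abs_cf_le(1)] abs_cg_le(1) k by (intro add_mono divide_right_mono) (auto simp: field_simps)
  finally show "norm (A_cos t) \<le> coeff_bound / (w * real k)"
    by (simp add: field_simps)
  have "norm (A_sin t) \<le> \<bar>cf t\<bar> / real k + \<bar>cg t\<bar> / real k'"
    using norm2[of "cf t / real k" 1 2 "cg t / real k'" 2 1] by (simp add: A_sin_def abs_divide)
  also have "\<dots> \<le> coeff_bound / w / real k + coeff_bound / w / real k"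
    using div_k'[OF abs_cg_le(1)] abs_cf_le(1) k by (intro add_mono divide_right_mono) auto
  finally show "norm (A_sin t) \<le> 2 * coeff_bound / (w * real k)"
    by (simp add: field_simps)
  have "norm (A_cos' t) \<le> \<bar>cg' t\<bar> / (2 * real k) + \<bar>cf' t\<bar> / (2 * real k')"
    using norm2[of "cg' t / (2 * real k)" 1 1 "cf' t / (2 * real k')" 2 2] by (simp add: A_cos'_def abs_divide)
  also have "\<dots> \<le> coeff_bound * real k / w / (2 * real k) + coeff_bound * real k / w / (2 * real k)"
    using div_k'[OF abs_cf_le(2)] abs_cg_le(2) k by (intro add_mono divide_right_mono) (auto simp: field_simps)
  finally show "norm (A_cos' t) \<le> coeff_bound / w"
    using k by (simp add: field_simps)
  have "norm (A_sin' t) \<le> \<bar>cf' t\<bar> / real k + \<bar>cg' t\<bar> / real k'"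
    using norm2[of "cf' t / real k" 1 2 "cg' t / real k'" 2 1] by (simp add: A_sin'_def abs_divide)
  also have "\<dots> \<le> coeff_bound * real k / w / real k + coeff_bound * real k / w / real k"
    using div_k'[OF abs_cg_le(2)] abs_cf_le(2) k by (intro add_mono divide_right_mono) auto
  finally show "norm (A_sin' t) \<le> 2 * coeff_bound / w"
    using k by (simp add: field_simps)
qed

lemma norm_Amat_bounds:
  "norm (Amat x y t - mat 1) \<le> 3 * coeff_bound / (w * real k)"
  "norm (pd 0 Amat x y t) \<le> 3 * coeff_bound / w"
  "norm (pd 1 Amat x y t) \<le> 3 * (1 + C0\<^sup>2) * coeff_bound / w"
  "norm (pd 2 Amat x y t) \<le> 3 * coeff_bound / w"
proof -
  have k: "0 < real k" "real k' \<le> (1 + C0\<^sup>2) * real k"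
    using k_pos freq_bounds(3) by (auto simp: freq_def)
  have "coeff_bound / (w * real k) + 2 * coeff_bound / (w * real k) = 3 * coeff_bound / (w * real k)"
    using w_pos k by (simp add: field_simps)
  then have sum: "norm (A_cos t) + norm (A_sin t) \<le> 3 * coeff_bound / (w * real k)"
    using add_mono[OF norm_A_cos_le[of t] norm_A_sin_le[of t]] by simp
  have "Amat x y t - mat 1 = (cos (real k * x) * cos (real k' * y)) *\<^sub>R A_cos t
      + (sin (real k * x) * sin (real k' * y)) *\<^sub>R A_sin t"
    by (simp add: Amat_def)
  also have "norm \<dots> \<le> 1 * (norm (A_cos t) + norm (A_sin t))"
    by (intro norm_scaleR_add_le) (auto simp: abs_mult mult_le_one)
  finally show "norm (Amat x y t - mat 1) \<le> 3 * coeff_bound / (w * real k)"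
    using sum by simp
  have "norm (pd 0 Amat x y t) \<le> real k * (norm (A_cos t) + norm (A_sin t))"
    unfolding pd_Amat Amat_dx_def
    by (intro norm_scaleR_add_le) (auto simp: abs_mult mult.assoc intro!: mult_left_le mult_le_one)
  also have "\<dots> \<le> real k * (3 * coeff_bound / (w * real k))"
    using sum k by (intro mult_left_mono) auto
  finally show "norm (pd 0 Amat x y t) \<le> 3 * coeff_bound / w"
    using k by simp
  have "norm (pd 1 Amat x y t) \<le> real k' * (norm (A_cos t) + norm (A_sin t))"
    unfolding pd_Amat Amat_dy_def
    by (intro norm_scaleR_add_le) (auto simp: abs_mult mult.assoc intro!: mult_left_le mult_le_one)
  also have "\<dots> \<le> ((1 + C0\<^sup>2) * real k) * (3 * coeff_bound / (w * real k))"
    using sum k by (intro mult_mono) auto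
  also have "\<dots> = 3 * (1 + C0\<^sup>2) * coeff_bound / w"
    using k w_pos by (simp add: field_simps)
  finally show "norm (pd 1 Amat x y t) \<le> 3 * (1 + C0\<^sup>2) * coeff_bound / w" .
  have "norm (pd 2 Amat x y t) \<le> 1 * (norm (A_cos' t) + norm (A_sin' t))"
    unfolding pd_Amat Amat_dt_def
    by (intro norm_scaleR_add_le) (auto simp: abs_mult mult_le_one)
  then show "norm (pd 2 Amat x y t) \<le> 3 * coeff_bound / w"
    using norm_A_cos'_le[of t] norm_A_sin'_le[of t] by simp
qed

lemma pd_u:
  "pd 0 u = (\<lambda>x y t. - (real k * sin (real k * x)) * (a 0 t * exp (- real k * t)))"
  "pd 1 u = (\<lambda>x y t. - (real k' * sin (real k' * y)) * (b 0 t * exp (- real k' * t)))"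
  "pd 2 (pd 2 u) x y t
     = cos (real k * x) * (a 2 t - 2 * real k * a 1 t + (real k)\<^sup>2 * a 0 t) * exp (- real k * t)
       + cos (real k' * y) * (b 2 t - 2 * real k' * b 1 t + (real k')\<^sup>2 * b 0 t) * exp (- real k' * t)"
proof -
  have "pd 0 u = sep_derivs modes [0]" "pd 1 u = sep_derivs modes [1]"
    "pd 2 (pd 2 u) = sep_derivs modes [2, 2]"
    using pderivs_u[of "[0]"] pderivs_u[of "[1]"] pderivs_u[of "[2, 2]"] by (simp_all add: pderivs_def)
  then show
    "pd 0 u = (\<lambda>x y t. - (real k * sin (real k * x)) * (a 0 t * exp (- real k * t)))"
    "pd 1 u = (\<lambda>x y t. - (real k' * sin (real k' * y)) * (b 0 t * exp (- real k' * t)))"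
    "pd 2 (pd 2 u) x y t
     = cos (real k * x) * (a 2 t - 2 * real k * a 1 t + (real k)\<^sup>2 * a 0 t) * exp (- real k * t)
       + cos (real k' * y) * (b 2 t - 2 * real k' * b 1 t + (real k')\<^sup>2 * b 0 t) * exp (- real k' * t)"
    by (simp_all add: fun_eq_iff sep_derivs_def modes_def cos_derivs_def damped_derivs_def damp_step_def
        cos_add eval_nat_numeral algebra_simps power2_eq_square)
qed

lemma Amat_pde:
  "pd 2 (pd 2 u) x y t
    + pd 0 (\<lambda>x y t. Amat x y t $ 1 $ 1 * pd 0 u x y t + Amat x y t $ 1 $ 2 * pd 1 u x y t) x y t
    + pd 1 (\<lambda>x y t. Amat x y t $ 2 $ 1 * pd 0 u x y t + Amat x y t $ 2 $ 2 * pd 1 u x y t) x y t = 0"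
proof -
  let ?s1 = "sin (real k * x)" and ?c1 = "cos (real k * x)"
  let ?s2 = "sin (real k' * y)" and ?c2 = "cos (real k' * y)"
  let ?E1 = "exp (- real k * t)" and ?E2 = "exp (- real k' * t)"
  have "pd 0 (\<lambda>x y t. Amat x y t $ 1 $ 1 * pd 0 u x y t + Amat x y t $ 1 $ 2 * pd 1 u x y t) x y t
     = - ((real k)\<^sup>2 * ?c1 * a 0 t * ?E1) + real k / 2 * cg t * a 0 t * ?E1 * ?c2 * (?s1\<^sup>2 - ?c1\<^sup>2)
       - real k' * ?c1 * ?s2\<^sup>2 * cf t * b 0 t * ?E2"
    unfolding Amat_entries pd_u
    using k_pos k_less by (intro pd_real_eqI) (auto intro!: derivative_eq_intros simp: field_simps power2_eq_square)
  moreover have "pd 1 (\<lambda>x y t. Amat x y t $ 2 $ 1 * pd 0 u x y t + Amat x y t $ 2 $ 2 * pd 1 u x y t) x y t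
     = - (real k * ?s1\<^sup>2 * ?c2 * cg t * a 0 t * ?E1) + real k' / 2 * ?s2\<^sup>2 * ?c1 * cf t * b 0 t * ?E2
       - (real k')\<^sup>2 * ?c2 * b 0 t * ?E2 - real k' / 2 * ?c1 * ?c2\<^sup>2 * cf t * b 0 t * ?E2"
    unfolding Amat_entries pd_u
    using k_pos k_less by (intro pd_real_eqI) (auto intro!: derivative_eq_intros simp: field_simps power2_eq_square)
  ultimately show ?thesis
    unfolding pd_u(3) by (simp only:) (rule pde_cancellation[OF _ _ cg_absorbs_residual cf_absorbs_residual]; simp)
qed

lemma transition_bound_ge:
  "3 * (1 + C0\<^sup>2) * coeff_bound \<le> transition_bound C0 B"
  "8 * (1 + B) * (1 + C0\<^sup>2)\<^sup>2 \<le> transition_bound C0 B"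
proof -
  let ?L = "1 + C0\<^sup>2"
  have L: "1 \<le> ?L" "?L\<^sup>2 \<le> ?L ^ 3"
    by (auto intro: power_increasing)
  have E: "1 \<le> exp (2 * C0)"
    using C0_ge_1 by simp
  have "3 * ?L * coeff_bound = 36 * B * ?L ^ 3 * exp (2 * C0)"
    by (simp add: coeff_bound_def power3_eq_cube power2_eq_square)
  also have "\<dots> \<le> transition_bound C0 B"
    unfolding transition_bound_def by (intro mult_right_mono) auto
  finally show "3 * ?L * coeff_bound \<le> transition_bound C0 B" .
  have "8 * (1 + B) * ?L\<^sup>2 \<le> 36 * (1 + B) * ?L ^ 3"
    using B_ge_1 L by (intro mult_mono) auto
  also have "\<dots> \<le> 36 * (1 + B) * ?L ^ 3 * exp (2 * C0)"
    using B_ge_1 E mult_left_mono[OF E, of "36 * (1 + B) * ?L ^ 3"] by simp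
  finally show "8 * (1 + B) * ?L\<^sup>2 \<le> transition_bound C0 B"
    by (simp add: transition_bound_def)
qed

lemma norm_Amat_le_transition_bound:
  "norm (Amat x y t - mat 1) \<le> transition_bound C0 B / (w * real k)"
  "norm (pd 0 Amat x y t) \<le> transition_bound C0 B / w"
  "norm (pd 1 Amat x y t) \<le> transition_bound C0 B / w"
  "norm (pd 2 Amat x y t) \<le> transition_bound C0 B / w"
proof -
  have "0 \<le> coeff_bound"
    using B_ge_1 by (simp add: coeff_bound_def)
  then have "3 * coeff_bound \<le> 3 * (1 + C0\<^sup>2) * coeff_bound"
    by (simp add: algebra_simps)
  then have "3 * coeff_bound \<le> transition_bound C0 B"
    using transition_bound_ge(1) by linarith
  then show "norm (Amat x y t - mat 1) \<le> transition_bound C0 B / (w * real k)"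
    "norm (pd 0 Amat x y t) \<le> transition_bound C0 B / w"
    "norm (pd 1 Amat x y t) \<le> transition_bound C0 B / w"
    "norm (pd 2 Amat x y t) \<le> transition_bound C0 B / w"
    using norm_Amat_bounds[of x y t] transition_bound_ge(1) k_pos w_pos
    by (auto intro: order.trans[OF _ divide_right_mono])
qed

lemma abs_pderivs_u_le_Sup:
  assumes "set is \<subseteq> {0, 1, 2}" "length is \<le> 2" "0 \<le> t"
  shows "\<bar>pderivs is u x y t\<bar> \<le> transition_bound C0 B * real k' ^ length is *
    Sup {\<bar>u x' y' t'\<bar> | x' y' t'. 0 \<le> t' \<and> t' \<le> 2 * w}"
proof -
  have "\<bar>pderivs is u x y t\<bar> \<le> transition_bound C0 B * real k' ^ length is"
    using abs_pderivs_u_le[OF assms, of x y] transition_bound_ge(2)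
    by (auto intro: order.trans[OF _ mult_right_mono])
  moreover have "0 \<le> transition_bound C0 B"
    using B_ge_1 by (simp add: transition_bound_def)
  ultimately show ?thesis
    using mult_left_mono[OF Sup_abs_u_ge_1, of "transition_bound C0 B * real k' ^ length is"] by simp
qed

lemma u_eq_ffun: "t \<le> 0 \<Longrightarrow> u x y t = ffun k x y t"
  using w_pos by (simp add: ufun_def theta_def divide_nonpos_pos)

lemma u_eq_gfun:
  assumes "2 * w \<le> t"
  shows "u x y t = gfun k' x y t"
proof -
  have "1 \<le> (t - w) / w"
    using assms w_pos by (simp add: field_simps)
  then have "theta ((t - w) / w) = 0"
    by (simp add: theta_def)
  then show ?thesis
    using assms w_pos by (simp add: ufun_def)
qed

lemma transition_properties:
  "let u = ufun k k' w in
      (\<exists>A :: real \<Rightarrow> real \<Rightarrow> real \<Rightarrow> real^2^2.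
         C1_fun3 A \<and> periodic_xy A \<and>
         (\<forall>x y t. (t \<le> 0 \<or> 2 * w \<le> t) \<longrightarrow> A x y t = mat 1) \<and>
         (\<forall>x y t.
            pd 2 (pd 2 u) x y t
            + pd 0 (\<lambda>x y t. A x y t $ 1 $ 1 * pd 0 u x y t + A x y t $ 1 $ 2 * pd 1 u x y t) x y t
            + pd 1 (\<lambda>x y t. A x y t $ 2 $ 1 * pd 0 u x y t + A x y t $ 2 $ 2 * pd 1 u x y t) x y t
            = 0) \<and>
         (\<forall>x y t. norm (A x y t - mat 1) \<le> transition_bound C0 B / (w * real k)
                 \<and> norm (pd 0 A x y t) \<le> transition_bound C0 B / w
                 \<and> norm (pd 1 A x y t) \<le> transition_bound C0 B / w
                 \<and> norm (pd 2 A x y t) \<le> transition_bound C0 B / w)) \<and>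
      (\<forall>is x y t. length is \<le> 2 \<and> set is \<subseteq> {0, 1, 2} \<and> 0 \<le> t \<and> t \<le> 2 * w \<longrightarrow>
         \<bar>pderivs is u x y t\<bar> \<le> transition_bound C0 B * real k' ^ length is *
            Sup {\<bar>u x' y' t'\<bar> | x' y' t'. 0 \<le> t' \<and> t' \<le> 2 * w}) \<and>
      (\<forall>x y t. t \<le> 0 \<longrightarrow> u x y t = ffun k x y t) \<and>
      (\<forall>x y t. 2 * w \<le> t \<longrightarrow> u x y t = gfun k' x y t)"
  unfolding Let_def
proof (intro conjI exI[of _ Amat] allI impI)
  fix "is" :: "nat list" and x y t :: real
  assume "length is \<le> 2 \<and> set is \<subseteq> {0, 1, 2} \<and> 0 \<le> t \<and> t \<le> 2 * w"
  then show "\<bar>pderivs is u x y t\<bar> \<le> transition_bound C0 B * real k' ^ length is *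
      Sup {\<bar>u x' y' t'\<bar> | x' y' t'. 0 \<le> t' \<and> t' \<le> 2 * w}"
    by (intro abs_pderivs_u_le_Sup) auto
qed (rule C1_Amat periodic_Amat Amat_eq_1 Amat_pde norm_Amat_le_transition_bound u_eq_ffun u_eq_gfun,
     assumption?)+

end

theorem lemma2p1:
  fixes C0 :: real
  assumes "C0 \<ge> 1"
  shows "\<exists>M::real. \<forall>(k::nat) (k'::nat) (w::real).
     0 < k \<and> 0 < k' \<and> 0 < w \<and>
     0 < real k' - real k \<and> real k' - real k \<le> C0 / w \<and> 1 / w \<le> C0 * real k \<longrightarrow>
     (let u = ufun k k' w in
      (\<exists>A :: real \<Rightarrow> real \<Rightarrow> real \<Rightarrow> real^2^2.
         C1_fun3 A \<and> periodic_xy A \<and>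
         (\<forall>x y t. (t \<le> 0 \<or> 2 * w \<le> t) \<longrightarrow> A x y t = mat 1) \<and>
         (\<forall>x y t.
            pd 2 (pd 2 u) x y t
            + pd 0 (\<lambda>x y t. A x y t $ 1 $ 1 * pd 0 u x y t + A x y t $ 1 $ 2 * pd 1 u x y t) x y t
            + pd 1 (\<lambda>x y t. A x y t $ 2 $ 1 * pd 0 u x y t + A x y t $ 2 $ 2 * pd 1 u x y t) x y t
            = 0) \<and>
         (\<forall>x y t. norm (A x y t - mat 1) \<le> M / (w * real k)
                 \<and> norm (pd 0 A x y t) \<le> M / w
                 \<and> norm (pd 1 A x y t) \<le> M / w
                 \<and> norm (pd 2 A x y t) \<le> M / w)) \<and>
      (\<forall>is x y t. length is \<le> 2 \<and> set is \<subseteq> {0, 1, 2} \<and> 0 \<le> t \<and> t \<le> 2 * w \<longrightarrow>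
         \<bar>pderivs is u x y t\<bar> \<le> M * real k' ^ length is *
            Sup {\<bar>u x' y' t'\<bar> | x' y' t'. 0 \<le> t' \<and> t' \<le> 2 * w}) \<and>
      (\<forall>x y t. t \<le> 0 \<longrightarrow> u x y t = ffun k x y t) \<and>
      (\<forall>x y t. 2 * w \<le> t \<longrightarrow> u x y t = gfun k' x y t))"
proof -
  obtain B where "\<forall>n\<le>3. \<forall>t. \<bar>theta_deriv n t\<bar> \<le> B"
    using theta_deriv_bounded by blast
  then show ?thesis
    using assms
    by (intro exI[of _ "transition_bound C0 B"] allI impI transition.transition_properties)
       (auto simp: transition_def)
qed

end
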